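(* Set $d^L=\beta\frac{v_0}{v_U}e^{-\mu a/v_0}g_0$, $d^U=\beta g_U\frac{v_U}{v_0}$, $Q=[d^L/\gamma,\,d^U/\gamma]$ and $R=\{\phi\in C^1:\phi([-r,0])\subset Q\}$. Then: (i) For all $\phi\in X_G$, $t_\phi=\infty$. (ii) For every neighbourhood $N$ of $Q$ in $\mathbb{R}$ and each $\phi\in X_G$ there exists $t(\phi,N)\in[0,\infty)$ with $x^\phi(t)\in N$ for all $t\ge t(\phi,N)$. (iii) If $\phi\in X_G\cap R$ then $x^\phi(t)\in Q$ for all $t\ge 0$. (iv) If $\phi\in X_G$ is strictly positive then $x^\phi(t)>0$ for all $t\ge -r$.
   Context: Constants $\beta,\mu,\gamma,a>0$. The function $g:\mathbb{R}\to(0,\infty)$ is continuously differentiable with $0<g_0:=\inf g(\mathbb{R})\le \sup g(\mathbb{R})=g_U<\infty$. The function $v:\mathbb{R}\to\mathbb{R}$ is continuously differentiable with $0<v_0\le v(x)\le v_U$ for all $x$. Fix $r>a/v_0$; $C=C([-r,0],\mathbb{R})$, $C^1=C^1([-r,0],\mathbb{R})$ with norm $|\phi|_1=\max|\phi|+\max|\phi'|$. Segments: $x_t(s)=x(t+s)$, $s\in[-r,0]$. For $\phi\in C$ let $\delta(\phi)$ be the unique $u\in(0,r)$ with $a=\int_{-u}^0 v(\phi(s))\,ds$. Define $G:C^1\to\mathbb{R}$ by $$G(\phi)=\beta e^{-\mu\delta(\phi)}\frac{v(\phi(0))}{v(\phi(-\delta(\phi)))}g(\phi(-\delta(\phi)))-\gamma\phi(0),$$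 and $X_G=\{\phi\in C^1:\phi'(0)=G(\phi)\}$. Each $\phi\in X_G$ determines a unique maximal continuously differentiable solution $x^\phi:[-r,t_\phi)\to\mathbb{R}$, $0<t_\phi\le\infty$, of $x'(t)=G(x_t)$ for $0<t<t_\phi$, $x_0=\phi$. *)

theory Defs
  imports "HOL-Analysis.Analysis"
begin

text \<open>Functions on [-r,0] are represented as total functions real => real;
only their values on [-r,0] matter.\<close>

definition C1_seg :: "real \<Rightarrow> (real \<Rightarrow> real) \<Rightarrow> bool" where
  "C1_seg r \<phi> \<longleftrightarrow> (\<exists>\<phi>'. (\<forall>s\<in>{-r..0}. (\<phi> has_real_derivative \<phi>' s) (at s within {-r..0}))
                       \<and> continuous_on {-r..0} \<phi>')"

definition delay :: "(real \<Rightarrow> real) \<Rightarrow> real \<Rightarrow> real \<Rightarrow> (real \<Rightarrow> real) \<Rightarrow> real" where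
  "delay v a r \<phi> = (THE u. u \<in> {0<..<r} \<and> a = integral {-u..0} (\<lambda>s. v (\<phi> s)))"

definition Gfun :: "real \<Rightarrow> real \<Rightarrow> real \<Rightarrow> real \<Rightarrow> (real \<Rightarrow> real) \<Rightarrow> (real \<Rightarrow> real) \<Rightarrow> real
                    \<Rightarrow> (real \<Rightarrow> real) \<Rightarrow> real" where
  "Gfun \<beta> \<mu> \<gamma> a g v r \<phi> =
     (let d = delay v a r \<phi> in
      \<beta> * exp (-\<mu> * d) * (v (\<phi> 0) / v (\<phi> (-d))) * g (\<phi> (-d)) - \<gamma> * \<phi> 0)"

definition XG :: "real \<Rightarrow> real \<Rightarrow> real \<Rightarrow> real \<Rightarrow> (real \<Rightarrow> real) \<Rightarrow> (real \<Rightarrow> real) \<Rightarrow> real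
                    \<Rightarrow> (real \<Rightarrow> real) set" where
  "XG \<beta> \<mu> \<gamma> a g v r = {\<phi>. C1_seg r \<phi> \<and>
      vector_derivative \<phi> (at 0 within {-r..0}) = Gfun \<beta> \<mu> \<gamma> a g v r \<phi>}"

definition is_sol :: "real \<Rightarrow> real \<Rightarrow> real \<Rightarrow> real \<Rightarrow> (real \<Rightarrow> real) \<Rightarrow> (real \<Rightarrow> real) \<Rightarrow> real
                    \<Rightarrow> (real \<Rightarrow> real) \<Rightarrow> ereal \<Rightarrow> (real \<Rightarrow> real) \<Rightarrow> bool" where
  "is_sol \<beta> \<mu> \<gamma> a g v r \<phi> T x \<longleftrightarrow>
     0 < T \<and>
     (\<exists>x'. (\<forall>t\<in>{s. -r \<le> s \<and> ereal s < T}.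
              (x has_real_derivative x' t) (at t within {s. -r \<le> s \<and> ereal s < T}))
          \<and> continuous_on {s. -r \<le> s \<and> ereal s < T} x') \<and>
     (\<forall>s\<in>{-r..0}. x s = \<phi> s) \<and>
     (\<forall>t. 0 < t \<and> ereal t < T \<longrightarrow>
          (x has_real_derivative Gfun \<beta> \<mu> \<gamma> a g v r (\<lambda>s. x (t + s))) (at t))"

definition max_sol :: "real \<Rightarrow> real \<Rightarrow> real \<Rightarrow> real \<Rightarrow> (real \<Rightarrow> real) \<Rightarrow> (real \<Rightarrow> real) \<Rightarrow> real
                    \<Rightarrow> (real \<Rightarrow> real) \<Rightarrow> ereal \<Rightarrow> (real \<Rightarrow> real) \<Rightarrow> bool" where
  "max_sol \<beta> \<mu> \<gamma> a g v r \<phi> T x \<longleftrightarrow>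
     is_sol \<beta> \<mu> \<gamma> a g v r \<phi> T x \<and>
     \<not> (\<exists>T' y. T < T' \<and> is_sol \<beta> \<mu> \<gamma> a g v r \<phi> T' y \<and>
               (\<forall>t. -r \<le> t \<and> ereal t < T \<longrightarrow> y t = x t))"

end

theory Submission
  imports Defs "HOL-Real_Asymp.Real_Asymp"
begin

text \<open>
  The delay \<open>\<delta>\<close> of every continuous history lies in \<open>[a / v\<^sub>U, a / v\<^sub>0]\<close>, which pins the inflow
  term \<open>P\<close> of \<open>G \<psi> = P \<psi> - \<gamma> \<psi>(0)\<close> between \<open>dL\<close> and \<open>dU\<close>. Comparing \<open>x' = P(x\<^sub>t) - \<gamma> x\<close> with the
  two linear equations yields
  \<open>x t - dU / \<gamma> \<le> (x 0 - dU / \<gamma>) exp (-\<gamma> t)\<close> and \<open>dL / \<gamma> - x t \<le> (dL / \<gamma> - x 0) exp (-\<gamma> t)\<close>,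
  whence attraction to \<open>Q\<close>, invariance of \<open>Q\<close> and positivity.

  The same bounds keep \<open>x\<close> and \<open>x'\<close> bounded on a finite existence interval \<open>[-r, T\<^sub>0)\<close>, so \<open>x\<close>
  is Lipschitz and extends continuously to \<open>T\<^sub>0\<close>. Past \<open>T\<^sub>0\<close> the delayed time
  \<open>\<Theta>(t) = t - \<delta>(x\<^sub>t)\<close> obeys \<open>\<Theta>' = v(x(t)) / v(x(\<Theta>(t)))\<close> and for a while stays in the known
  past. Hence \<open>(x, \<Theta>)\<close> solves an ordinary differential equation with Lipschitz right-hand side, and
  Picard iteration continues the solution beyond \<open>T\<^sub>0\<close>: a maximal solution exists for all times.
\<close>

section \<open>Lipschitz estimates and Picard iteration\<close>

lemma increment_bounds_from_derivative_bounds: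
  fixes W w :: "real \<Rightarrow> real"
  assumes "p \<le> q"
    and "\<And>s. s \<in> {p..q} \<Longrightarrow> (W has_real_derivative w s) (at s within {p..q})"
    and "\<And>s. s \<in> {p..q} \<Longrightarrow> m \<le> w s \<and> w s \<le> M"
  shows "m * (q - p) \<le> W q - W p \<and> W q - W p \<le> M * (q - p)"
proof -
  have W: "(w has_integral (W q - W p)) {p..q}"
    using fundamental_theorem_of_calculus[of p q W w] assms(1,2)
    by (simp add: has_real_derivative_iff_has_vector_derivative)
  have const: "((\<lambda>_. c) has_integral (c * (q - p))) {p..q}" for c
    using has_integral_const_real[of c p q] assms(1) by (simp add: mult.commute)
  show ?thesis
    using has_integral_le[OF const[of m] W] has_integral_le[OF W const[of M]] assms(3) by auto
qed

lemma lipschitz_on_interval_if_derivative_bounded: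
  fixes f f' :: "real \<Rightarrow> real"
  assumes "is_interval X" "0 \<le> B"
    and "\<And>t. t \<in> X \<Longrightarrow> (f has_real_derivative f' t) (at t within X)"
    and "\<And>t. t \<in> X \<Longrightarrow> \<bar>f' t\<bar> \<le> B"
  shows "B-lipschitz_on X f"
proof (rule lipschitz_on_leI[OF _ \<open>0 \<le> B\<close>])
  fix p q assume pq: "p \<in> X" "q \<in> X" "p \<le> q"
  have sub: "{p..q} \<subseteq> X"
    using mem_is_interval_1_I[OF assms(1) pq(1,2)] by auto
  have "(-B) * (q - p) \<le> f q - f p \<and> f q - f p \<le> B * (q - p)"
  proof (rule increment_bounds_from_derivative_bounds[OF \<open>p \<le> q\<close>])
    fix s assume s: "s \<in> {p..q}"
    show "(f has_real_derivative f' s) (at s within {p..q})"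
      by (rule DERIV_subset[OF assms(3) sub]) (use s sub in auto)
    show "- B \<le> f' s \<and> f' s \<le> B"
      using assms(4)[of s] s sub by auto
  qed
  then show "dist (f p) (f q) \<le> B * dist p q"
    using pq by (simp add: dist_real_def abs_le_iff)
qed

lemma lipschitz_on_compact_interval_if_C1:
  fixes F F' :: "real \<Rightarrow> real"
  assumes "\<And>y. (F has_real_derivative F' y) (at y)" "continuous_on UNIV F'"
  obtains L where "L-lipschitz_on {c..d} F"
proof -
  have "bounded (F' ` {c..d})"
    by (intro compact_imp_bounded compact_continuous_image continuous_on_subset[OF assms(2)]) auto
  then obtain B where "\<forall>y\<in>F' ` {c..d}. \<bar>y\<bar> \<le> B"
    unfolding bounded_real by blast
  then have "(max B 0)-lipschitz_on {c..d} F"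
    by (intro lipschitz_on_interval_if_derivative_bounded[where f'=F'])
       (auto intro: has_field_derivative_at_within[OF assms(1)] simp: max.coboundedI1)
  then show ?thesis ..
qed

lemma exp_lipschitz_on_nonpos: "1-lipschitz_on {..0::real} exp"
  by (rule lipschitz_on_interval_if_derivative_bounded[where f'=exp])
     (auto intro: has_field_derivative_at_within[OF DERIV_exp])

lemma lipschitz_on_mult_bounded:
  fixes f g :: "'a::metric_space \<Rightarrow> real"
  assumes f: "Lf-lipschitz_on U f" and g: "Lg-lipschitz_on U g"
    and bounds: "\<And>z. z \<in> U \<Longrightarrow> \<bar>f z\<bar> \<le> Bf" "\<And>z. z \<in> U \<Longrightarrow> \<bar>g z\<bar> \<le> Bg"
    and "0 \<le> Bf" "0 \<le> Bg"
  shows "(Bf * Lg + Bg * Lf)-lipschitz_on U (\<lambda>z. f z * g z)"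
proof (rule lipschitz_onI)
  fix z w assume zw: "z \<in> U" "w \<in> U"
  have "f z * g z - f w * g w = f z * (g z - g w) + g w * (f z - f w)"
    by algebra
  then have "dist (f z * g z) (f w * g w) \<le> \<bar>f z\<bar> * dist (g z) (g w) + \<bar>g w\<bar> * dist (f z) (f w)"
    by (simp add: dist_real_def abs_mult[symmetric] abs_triangle_ineq)
  also have "\<dots> \<le> Bf * (Lg * dist z w) + Bg * (Lf * dist z w)"
    using assms zw by (intro add_mono mult_mono lipschitz_onD[OF f] lipschitz_onD[OF g]) auto
  finally show "dist (f z * g z) (f w * g w) \<le> (Bf * Lg + Bg * Lf) * dist z w"
    by (simp add: algebra_simps)
next
  show "0 \<le> Bf * Lg + Bg * Lf"
    using lipschitz_on_nonneg[OF f] lipschitz_on_nonneg[OF g] assms by simp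
qed

lemma lipschitz_on_inverse_bounded_below:
  fixes g :: "'a::metric_space \<Rightarrow> real"
  assumes g: "Lg-lipschitz_on U g" and "0 < m" and below: "\<And>z. z \<in> U \<Longrightarrow> m \<le> g z"
  shows "(Lg / m\<^sup>2)-lipschitz_on U (\<lambda>z. 1 / g z)"
proof (rule lipschitz_onI)
  fix z w assume zw: "z \<in> U" "w \<in> U"
  have pos: "0 < g z" "0 < g w"
    using below zw \<open>0 < m\<close> by (auto intro: less_le_trans)
  have "dist (1 / g z) (1 / g w) = dist (g z) (g w) / (g z * g w)"
    using pos by (simp add: dist_real_def field_simps abs_minus_commute)
  also have "\<dots> \<le> (Lg * dist z w) / m\<^sup>2"
    unfolding power2_eq_square using pos below zw \<open>0 < m\<close>
    using lipschitz_on_nonneg[OF g] by (intro frac_le lipschitz_onD[OF g] mult_mono) auto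
  finally show "dist (1 / g z) (1 / g w) \<le> Lg / m\<^sup>2 * dist z w"
    by simp
next
  show "0 \<le> Lg / m\<^sup>2"
    using lipschitz_on_nonneg[OF g] by simp
qed

lemma lipschitz_on_fst: "1-lipschitz_on U fst"
  by (rule lipschitz_onI) (auto simp: dist_fst_le)

lemma lipschitz_on_snd: "1-lipschitz_on U snd"
  by (rule lipschitz_onI) (auto simp: dist_snd_le)

lemma clamp_real_in_interval: "(a::real) \<le> b \<Longrightarrow> clamp a b y \<in> {a..b}"
  using clamp_in_interval[of a b y] by (simp add: cbox_interval)

lemma clamp_real_eq_self: "(y::real) \<in> {a..b} \<Longrightarrow> clamp a b y = y"
  using clamp_cancel_cbox[of y a b] by (simp add: cbox_interval)

lemma lipschitz_on_clamp_real: "1-lipschitz_on U (clamp a b :: real \<Rightarrow> real)"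
  by (rule lipschitz_onI) (simp_all add: dist_clamps_le_dist_args)

lemma has_vector_derivative_fst_snd:
  assumes "(u has_vector_derivative w) F"
  shows "((\<lambda>t. fst (u t)) has_real_derivative fst w) F"
    and "((\<lambda>t. snd (u t)) has_real_derivative snd w) F"
  using has_derivative_fst[OF assms[unfolded has_vector_derivative_def]]
    has_derivative_snd[OF assms[unfolded has_vector_derivative_def]]
  by (simp_all add: has_real_derivative_iff_has_vector_derivative has_vector_derivative_def)

lemma has_real_derivative_within_Un:
  assumes "(f has_real_derivative D) (at x within A)" "(f has_real_derivative D) (at x within B)"
  shows "(f has_real_derivative D) (at x within A \<union> B)"
  using assms by (simp add: has_field_derivative_iff Lim_within_Un)

lemma linear_differential_inequality_upper:
  fixes x p :: "real \<Rightarrow> real"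
  assumes "0 < \<gamma>" "0 \<le> t" "continuous_on {0..t} x"
    and "\<And>s. 0 < s \<Longrightarrow> s < t \<Longrightarrow> (x has_real_derivative p s - \<gamma> * x s) (at s)"
    and "\<And>s. 0 < s \<Longrightarrow> s < t \<Longrightarrow> p s \<le> c"
  shows "x t - c / \<gamma> \<le> (x 0 - c / \<gamma>) * exp (- \<gamma> * t)"
proof -
  define w where "w s = exp (\<gamma> * s) * (x s - c / \<gamma>)" for s
  have "w t \<le> w 0"
  proof (rule DERIV_nonpos_imp_decreasing_open[OF \<open>0 \<le> t\<close>])
    fix s assume s: "0 < s" "s < t"
    have "(w has_real_derivative exp (\<gamma> * s) * (p s - c)) (at s)"
      unfolding w_def using assms(4)[OF s] \<open>0 < \<gamma>\<close>
      by (auto intro!: derivative_eq_intros simp: field_simps)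
    moreover have "exp (\<gamma> * s) * (p s - c) \<le> 0"
      using assms(5)[OF s] by (simp add: mult_nonneg_nonpos)
    ultimately show "\<exists>y. (w has_real_derivative y) (at s) \<and> y \<le> 0"
      by blast
  next
    show "continuous_on {0..t} w"
      unfolding w_def by (intro continuous_intros assms(3))
  qed
  then show ?thesis
    by (simp add: w_def exp_minus field_simps)
qed

lemma linear_differential_inequality_lower:
  fixes x p :: "real \<Rightarrow> real"
  assumes "0 < \<gamma>" "0 \<le> t" "continuous_on {0..t} x"
    and "\<And>s. 0 < s \<Longrightarrow> s < t \<Longrightarrow> (x has_real_derivative p s - \<gamma> * x s) (at s)"
    and "\<And>s. 0 < s \<Longrightarrow> s < t \<Longrightarrow> c \<le> p s"
  shows "c / \<gamma> - x t \<le> (c / \<gamma> - x 0) * exp (- \<gamma> * t)"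
proof -
  have "- x t - (- c) / \<gamma> \<le> (- x 0 - (- c) / \<gamma>) * exp (- \<gamma> * t)"
    by (rule linear_differential_inequality_upper[where p="\<lambda>s. - p s"])
       (use assms in \<open>auto intro!: continuous_intros derivative_eq_intros\<close>)
  then show ?thesis
    by (metis add.commute diff_minus_eq_add minus_divide_left uminus_add_conv_diff)
qed

lemma ereal_le_less_trans: "s \<le> b \<Longrightarrow> ereal b < T \<Longrightarrow> ereal s < T"
  by (meson ereal_less_eq(3) order.strict_trans1)

lemma clamped_indefinite_integral_bcontfun:
  fixes w :: "real \<Rightarrow> 'a::banach"
  assumes "a \<le> b" "continuous_on {a..b} w"
  shows "(\<lambda>t. z + integral {a..clamp a b t} w) \<in> bcontfun"
proof -
  have c: "continuous_on {a..b} (\<lambda>\<tau>. z + integral {a..\<tau>} w)"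
    by (intro continuous_intros indefinite_integral_continuous_1 integrable_continuous_real assms(2))
  then have "bounded ((\<lambda>\<tau>. z + integral {a..\<tau>} w) ` cbox a b)"
    by (intro compact_imp_bounded compact_continuous_image) (simp_all add: cbox_interval)
  then have "bounded (range (\<lambda>t. z + integral {a..clamp a b t} w))"
    by (rule clamp_bounded)
  moreover have "continuous_on UNIV (\<lambda>t. z + integral {a..clamp a b t} w)"
    using c by (intro clamp_continuous_on) (simp add: cbox_interval)
  ultimately show ?thesis
    by (simp add: bcontfun_def)
qed

lemma norm_integral_diff_le_lipschitz:
  fixes f :: "real \<Rightarrow> 'a::banach \<Rightarrow> 'a"
  assumes "a \<le> c" "0 \<le> L" and lip: "\<And>s. s \<in> {a..c} \<Longrightarrow> L-lipschitz_on UNIV (f s)"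
    and int: "(\<lambda>s. f s (u s)) integrable_on {a..c}" "(\<lambda>s. f s (w s)) integrable_on {a..c}"
    and close: "\<And>s. norm (u s - w s) \<le> D"
  shows "norm (integral {a..c} (\<lambda>s. f s (u s)) - integral {a..c} (\<lambda>s. f s (w s))) \<le> L * D * (c - a)"
proof -
  have "norm (integral {a..c} (\<lambda>s. f s (u s) - f s (w s))) \<le> (L * D) * measure lborel (cbox a c)"
  proof (rule has_integral_bound)
    fix s assume "s \<in> cbox a c"
    then have "norm (f s (u s) - f s (w s)) \<le> L * norm (u s - w s)"
      using lip by (intro lipschitz_on_normD) auto
    also have "\<dots> \<le> L * D"
      using close \<open>0 \<le> L\<close> by (rule mult_left_mono)
    finally show "norm (f s (u s) - f s (w s)) \<le> L * D" .
  next
    show "0 \<le> L * D"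
      using order_trans[OF norm_ge_zero close[of a]] \<open>0 \<le> L\<close> by simp
  qed (use integrable_diff[OF int] in auto)
  then show ?thesis
    using \<open>a \<le> c\<close> by (simp add: integral_diff[OF int])
qed

text \<open>Picard iteration: the integral operator is a contraction on bounded continuous functions,
  the solution candidates being frozen outside \<open>[t\<^sub>0, t\<^sub>0 + h]\<close> by clamping the upper limit.\<close>

lemma picard_integral_fixed_point:
  fixes f :: "real \<Rightarrow> 'a::banach \<Rightarrow> 'a"
  assumes "0 < h" "h * L < 1"
    and lip: "\<And>t. t \<in> {t\<^sub>0..t\<^sub>0+h} \<Longrightarrow> L-lipschitz_on UNIV (f t)"
    and cont: "\<And>u. continuous_on {t\<^sub>0..t\<^sub>0+h} u \<Longrightarrow> continuous_on {t\<^sub>0..t\<^sub>0+h} (\<lambda>s. f s (u s))"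
  obtains u where "continuous_on {t\<^sub>0..t\<^sub>0+h} u"
    and "\<forall>\<tau>\<in>{t\<^sub>0..t\<^sub>0+h}. u \<tau> = z\<^sub>0 + integral {t\<^sub>0..\<tau>} (\<lambda>s. f s (u s))"
proof -
  define F where "F u t = z\<^sub>0 + integral {t\<^sub>0..clamp t\<^sub>0 (t\<^sub>0+h) t} (\<lambda>s. f s (u s))"
    for u :: "real \<Rightarrow> 'a" and t
  define \<Phi> where "\<Phi> u = Bcontfun (F (apply_bcontfun u))" for u
  have "0 \<le> L"
    using lip[of t\<^sub>0] \<open>0 < h\<close> lipschitz_on_nonneg by force
  have \<Phi>_apply: "apply_bcontfun (\<Phi> u) = F u" for u
    unfolding \<Phi>_def F_def using \<open>0 < h\<close>
    by (subst Bcontfun_inverse) (auto intro!: clamped_indefinite_integral_bcontfun cont)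
  have "dist (\<Phi> u) (\<Phi> w) \<le> (h * L) * dist u w" for u w
  proof (rule dist_bound)
    fix t
    define c where "c = clamp t\<^sub>0 (t\<^sub>0+h) t"
    have c: "c \<in> {t\<^sub>0..t\<^sub>0+h}"
      unfolding c_def using \<open>0 < h\<close> by (intro clamp_real_in_interval) simp
    have int: "(\<lambda>s. f s (v s)) integrable_on {t\<^sub>0..c}" for v :: "real \<Rightarrow>\<^sub>C 'a"
      using c by (intro integrable_continuous_real continuous_on_subset[OF cont]) auto
    have close: "norm (u s - w s) \<le> dist u w" for s
      using dist_bounded by (metis dist_norm)
    have "dist (\<Phi> u t) (\<Phi> w t) = norm (integral {t\<^sub>0..c} (\<lambda>s. f s (u s)) - integral {t\<^sub>0..c} (\<lambda>s. f s (w s)))"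
      by (simp add: \<Phi>_apply F_def c_def dist_norm)
    also have "\<dots> \<le> L * dist u w * (c - t\<^sub>0)"
      using c \<open>0 \<le> L\<close> lip by (intro norm_integral_diff_le_lipschitz int close) auto
    also have "\<dots> \<le> L * dist u w * h"
      using c \<open>0 \<le> L\<close> by (intro mult_left_mono) auto
    finally show "dist (\<Phi> u t) (\<Phi> w t) \<le> h * L * dist u w"
      by (simp add: algebra_simps)
  qed
  then obtain u where "\<Phi> u = u"
    using banach_fix_type[of "h * L" \<Phi>] assms(1,2) \<open>0 \<le> L\<close> by auto
  then have "\<forall>\<tau>\<in>{t\<^sub>0..t\<^sub>0+h}. u \<tau> = z\<^sub>0 + integral {t\<^sub>0..\<tau>} (\<lambda>s. f s (u s))"
    using \<Phi>_apply[of u] by (metis F_def clamp_real_eq_self)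
  then show ?thesis
    using that[of "apply_bcontfun u"] by simp
qed

lemma picard_local_existence:
  fixes f :: "real \<Rightarrow> 'a::banach \<Rightarrow> 'a"
  assumes "0 < h" "h * L < 1"
    and lip: "\<And>t. t \<in> {t\<^sub>0..t\<^sub>0+h} \<Longrightarrow> L-lipschitz_on UNIV (f t)"
    and cont: "\<And>u. continuous_on {t\<^sub>0..t\<^sub>0+h} u \<Longrightarrow> continuous_on {t\<^sub>0..t\<^sub>0+h} (\<lambda>s. f s (u s))"
  obtains u where "u t\<^sub>0 = z\<^sub>0"
    and "\<forall>t\<in>{t\<^sub>0..t\<^sub>0+h}. (u has_vector_derivative f t (u t)) (at t within {t\<^sub>0..t\<^sub>0+h})"
proof -
  obtain u where u: "continuous_on {t\<^sub>0..t\<^sub>0+h} u"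
    and eq: "\<forall>\<tau>\<in>{t\<^sub>0..t\<^sub>0+h}. u \<tau> = z\<^sub>0 + integral {t\<^sub>0..\<tau>} (\<lambda>s. f s (u s))"
    by (rule picard_integral_fixed_point[OF assms])
  have "(u has_vector_derivative f t (u t)) (at t within {t\<^sub>0..t\<^sub>0+h})" if t: "t \<in> {t\<^sub>0..t\<^sub>0+h}" for t
  proof -
    have "((\<lambda>\<tau>. z\<^sub>0 + integral {t\<^sub>0..\<tau>} (\<lambda>s. f s (u s))) has_vector_derivative f t (u t))
        (at t within {t\<^sub>0..t\<^sub>0+h})"
      using integral_has_vector_derivative[OF cont[OF u] t] has_vector_derivative_add[OF has_vector_derivative_const]
      by fastforce
    then show ?thesis
      by (rule has_vector_derivative_transform[OF t eq[rule_format], rotated])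
  qed
  moreover have "u t\<^sub>0 = z\<^sub>0"
    using eq \<open>0 < h\<close> by simp
  ultimately show ?thesis
    using that by blast
qed

section \<open>Delay bounds and a priori estimates\<close>

locale sdde =
  fixes \<beta> \<mu> \<gamma> a r v\<^sub>0 v\<^sub>U :: real and g g' v v' :: "real \<Rightarrow> real"
  assumes \<beta>_pos: "\<beta> > 0" and \<mu>_pos: "\<mu> > 0" and \<gamma>_pos: "\<gamma> > 0" and a_pos: "a > 0"
    and g_deriv: "\<And>y. (g has_real_derivative g' y) (at y)" and g'_cont: "continuous_on UNIV g'"
    and g_pos: "\<And>y. g y > 0" and g_bdd_above: "bdd_above (range g)"
    and g_Inf_pos: "Inf (range g) > 0"
    and v_deriv: "\<And>y. (v has_real_derivative v' y) (at y)" and v'_cont: "continuous_on UNIV v'"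
    and v\<^sub>0_pos: "v\<^sub>0 > 0" and v_bounds: "\<And>y. v\<^sub>0 \<le> v y \<and> v y \<le> v\<^sub>U"
    and r_gt: "r > a / v\<^sub>0"
begin

lemma v_pos: "v y > 0"
  using v_bounds[of y] v\<^sub>0_pos by linarith

lemma v\<^sub>U_pos: "v\<^sub>U > 0"
  using v_bounds[of 0] v\<^sub>0_pos by linarith

lemma r_pos: "r > 0"
  using r_gt a_pos v\<^sub>0_pos by (smt (verit) divide_pos_pos)

lemma continuous_on_v: "continuous_on S v"
  using DERIV_continuous_on[OF v_deriv[THEN has_field_derivative_at_within]] .

lemma continuous_on_g: "continuous_on S g"
  using DERIV_continuous_on[OF g_deriv[THEN has_field_derivative_at_within]] .

lemma g_bounds: "Inf (range g) \<le> g y \<and> g y \<le> Sup (range g)"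
proof
  have "bdd_below (range g)"
    using g_pos by (metis bdd_belowI2 less_imp_le)
  then show "Inf (range g) \<le> g y"
    by (simp add: cInf_lower)
  show "g y \<le> Sup (range g)"
    using g_bdd_above by (simp add: cSup_upper)
qed

definition dL :: real where
  "dL = \<beta> * (v\<^sub>0 / v\<^sub>U) * exp (-\<mu> * a / v\<^sub>0) * Inf (range g)"

definition dU :: real where
  "dU = \<beta> * Sup (range g) * (v\<^sub>U / v\<^sub>0)"

definition inflow :: "(real \<Rightarrow> real) \<Rightarrow> real" where
  "inflow \<psi> = (let d = delay v a r \<psi> in \<beta> * exp (-\<mu> * d) * (v (\<psi> 0) / v (\<psi> (-d))) * g (\<psi> (-d)))"

lemma Gfun_eq_inflow: "Gfun \<beta> \<mu> \<gamma> a g v r \<psi> = inflow \<psi> - \<gamma> * \<psi> 0"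
  by (simp add: Gfun_def inflow_def Let_def)

lemma dL_pos: "dL > 0"
  unfolding dL_def using \<beta>_pos v\<^sub>0_pos v\<^sub>U_pos g_Inf_pos by simp

lemma dU_pos: "dU > 0"
proof -
  have "0 < Sup (range g)"
    using g_bounds[of 0] g_pos[of 0] by linarith
  then show ?thesis
    unfolding dU_def using \<beta>_pos v\<^sub>0_pos v\<^sub>U_pos by simp
qed

lemma inflow_bounds:
  assumes "0 \<le> delay v a r \<psi>" "delay v a r \<psi> \<le> a / v\<^sub>0"
  shows "dL \<le> inflow \<psi> \<and> inflow \<psi> \<le> dU"
proof -
  define d where "d = delay v a r \<psi>"
  define q where "q = v (\<psi> 0) / v (\<psi> (-d))"
  have exp_bounds: "exp (-\<mu> * a / v\<^sub>0) \<le> exp (-\<mu> * d)" "exp (-\<mu> * d) \<le> 1"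
    using mult_left_mono[OF assms(2), of \<mu>] assms(1) \<mu>_pos unfolding d_def by simp_all
  have q_bounds: "v\<^sub>0 / v\<^sub>U \<le> q" "q \<le> v\<^sub>U / v\<^sub>0"
    unfolding q_def using v_bounds[of "\<psi> 0"] v_bounds[of "\<psi> (-d)"] v\<^sub>0_pos
    by (auto intro!: frac_le)
  have q_pos: "0 < q"
    unfolding q_def using v_pos by simp
  have lower: "(v\<^sub>0 / v\<^sub>U) * exp (-\<mu> * a / v\<^sub>0) * Inf (range g) \<le> q * exp (-\<mu> * d) * g (\<psi> (-d))"
    using v\<^sub>0_pos v\<^sub>U_pos g_Inf_pos q_pos
    by (intro mult_mono exp_bounds q_bounds g_bounds[THEN conjunct1]) auto
  have upper: "q * exp (-\<mu> * d) * g (\<psi> (-d)) \<le> (v\<^sub>U / v\<^sub>0) * 1 * Sup (range g)"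
    using v\<^sub>0_pos v\<^sub>U_pos g_pos[of "\<psi> (-d)"] q_bounds
    by (intro mult_mono exp_bounds q_bounds g_bounds[THEN conjunct2]) auto
  have "inflow \<psi> = \<beta> * (q * exp (-\<mu> * d) * g (\<psi> (-d)))"
    by (simp add: inflow_def d_def q_def Let_def)
  moreover have "dL = \<beta> * ((v\<^sub>0 / v\<^sub>U) * exp (-\<mu> * a / v\<^sub>0) * Inf (range g))"
    and "dU = \<beta> * ((v\<^sub>U / v\<^sub>0) * 1 * Sup (range g))"
    by (simp_all add: dL_def dU_def ac_simps)
  ultimately show ?thesis
    using mult_left_mono[OF lower, of \<beta>] mult_left_mono[OF upper, of \<beta>] \<beta>_pos by simp
qed

lemma Gfun_cong:
  assumes "\<And>s. s \<in> {-r..0} \<Longrightarrow> \<psi>\<^sub>1 s = \<psi>\<^sub>2 s" "0 \<le> delay v a r \<psi>\<^sub>1" "delay v a r \<psi>\<^sub>1 \<le> r"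
  shows "Gfun \<beta> \<mu> \<gamma> a g v r \<psi>\<^sub>1 = Gfun \<beta> \<mu> \<gamma> a g v r \<psi>\<^sub>2"
proof -
  have "integral {-u..0} (\<lambda>s. v (\<psi>\<^sub>1 s)) = integral {-u..0} (\<lambda>s. v (\<psi>\<^sub>2 s))" if "u \<in> {0<..<r}" for u
    using that assms(1) by (intro integral_cong) auto
  then have "delay v a r \<psi>\<^sub>1 = delay v a r \<psi>\<^sub>2"
    unfolding delay_def by metis
  moreover have "\<psi>\<^sub>1 0 = \<psi>\<^sub>2 0" "\<psi>\<^sub>1 (- delay v a r \<psi>\<^sub>1) = \<psi>\<^sub>2 (- delay v a r \<psi>\<^sub>1)"
    using assms r_pos by auto
  ultimately show ?thesis
    by (simp add: Gfun_def Let_def)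
qed

text \<open>If \<open>V\<close> is an antiderivative of \<open>v \<circ> z\<close> on the history window, the delay of the segment of \<open>z\<close>
  at time \<open>t\<close> is the \<open>u\<close> solving \<open>V t - V (t - u) = a\<close>.\<close>

lemma antiderivative_increment_bounds:
  assumes "\<And>s. s \<in> {c..d} \<Longrightarrow> (V has_real_derivative v (z s)) (at s within {c..d})"
    and "c \<le> p" "p \<le> q" "q \<le> d"
  shows "v\<^sub>0 * (q - p) \<le> V q - V p \<and> V q - V p \<le> v\<^sub>U * (q - p)"
proof (rule increment_bounds_from_derivative_bounds[where w="\<lambda>s. v (z s)"])
  fix s assume "s \<in> {p..q}"
  then show "(V has_real_derivative v (z s)) (at s within {p..q})"
    using assms by (intro DERIV_subset[OF assms(1)]) auto
qed (use assms v_bounds in auto)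

lemma delay_integral:
  assumes V: "\<And>s. s \<in> {t-r..t} \<Longrightarrow> (V has_real_derivative v (z s)) (at s within {t-r..t})"
    and "0 \<le> u" "u \<le> r"
  shows "integral {-u..0} (\<lambda>s. v (z (t + s))) = V t - V (t - u)"
proof -
  have "((\<lambda>s. v (z (t + s))) has_integral (V (t + 0) - V (t + -u))) {-u..0}"
  proof (rule fundamental_theorem_of_calculus[of "-u" 0 "\<lambda>s. V (t + s)",
        unfolded has_real_derivative_iff_has_vector_derivative[symmetric]])
    fix s assume s: "s \<in> {-u..0}"
    have "(V has_real_derivative v (z (t + s))) (at (t + s) within {t-r..t})"
      using V s assms(2,3) by auto
    then have "(V has_real_derivative v (z (t + s))) (at (t + s) within (+) t ` {-u..0})"
      by (rule DERIV_subset) (use assms(2,3) in auto)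
    moreover have "((+) t has_vector_derivative 1) (at s within {-u..0})"
      by (auto intro!: derivative_eq_intros)
    ultimately show "((\<lambda>s. V (t + s)) has_real_derivative v (z (t + s))) (at s within {-u..0})"
      using vector_diff_chain_within
      by (fastforce simp: has_real_derivative_iff_has_vector_derivative o_def)
  qed (use assms(2) in simp)
  then show ?thesis
    by (simp add: integral_unique)
qed

lemma delay_eqI:
  assumes V: "\<And>s. s \<in> {t-r..t} \<Longrightarrow> (V has_real_derivative v (z s)) (at s within {t-r..t})"
    and u: "0 < u" "u < r" "V t - V (t - u) = a"
  shows "delay v a r (\<lambda>s. z (t + s)) = u"
  unfolding delay_def
proof (rule the_equality)
  show "u \<in> {0<..<r} \<and> a = integral {-u..0} (\<lambda>s. v (z (t + s)))"
    using u delay_integral[OF V, of u] by auto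
next
  fix w assume w: "w \<in> {0<..<r} \<and> a = integral {-w..0} (\<lambda>s. v (z (t + s)))"
  then have w_eq: "V t - V (t - w) = a"
    using delay_integral[OF V, of w] by auto
  have strict: "V p < V q" if "t - r \<le> p" "p < q" "q \<le> t" for p q
    using antiderivative_increment_bounds[OF V, of p q] that v\<^sub>0_pos
    by (smt (verit) mult_pos_pos)
  show "w = u"
    using strict[of "t - u" "t - w"] strict[of "t - w" "t - u"] u w w_eq
    by (cases w u rule: linorder_cases) auto
qed

lemma delay_bounds:
  assumes V: "\<And>s. s \<in> {t-r..t} \<Longrightarrow> (V has_real_derivative v (z s)) (at s within {t-r..t})"
  defines "d \<equiv> delay v a r (\<lambda>s. z (t + s))"
  shows "0 < d \<and> d < r \<and> a / v\<^sub>U \<le> d \<and> d \<le> a / v\<^sub>0 \<and> V t - V (t - d) = a"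
proof -
  define f where "f u = V t - V (t - u)" for u
  have "continuous_on {t-r..t} V"
    using DERIV_continuous_on[OF V] .
  then have "continuous_on {0..a / v\<^sub>0} f"
    unfolding f_def using r_gt
    by (intro continuous_intros continuous_on_compose2[OF \<open>continuous_on {t-r..t} V\<close>]) auto
  moreover have "a \<le> f (a / v\<^sub>0)"
    using antiderivative_increment_bounds[OF V, of "t - a / v\<^sub>0" t] r_gt v\<^sub>0_pos a_pos
    by (auto simp: f_def)
  ultimately obtain u where u: "0 \<le> u" "u \<le> a / v\<^sub>0" "f u = a"
    using IVT'[of f 0 a "a / v\<^sub>0"] a_pos v\<^sub>0_pos by (auto simp: f_def)
  have "u \<noteq> 0" "u < r"
    using u a_pos r_gt by (auto simp: f_def)
  with u have "d = u"
    unfolding d_def f_def by (intro delay_eqI[OF V]) auto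
  moreover have "a \<le> v\<^sub>U * u"
    using antiderivative_increment_bounds[OF V, of "t - u" t] u \<open>u < r\<close> by (auto simp: f_def)
  then have "a / v\<^sub>U \<le> u"
    using v\<^sub>U_pos by (simp add: field_simps)
  ultimately show ?thesis
    using u \<open>u \<noteq> 0\<close> \<open>u < r\<close> by (auto simp: f_def)
qed

lemma delay_bounds_continuous:
  assumes "continuous_on {t-r..t} z"
  defines "d \<equiv> delay v a r (\<lambda>s. z (t + s))"
  shows "0 < d \<and> d < r \<and> a / v\<^sub>U \<le> d \<and> d \<le> a / v\<^sub>0"
proof -
  have "continuous_on {t-r..t} (\<lambda>s. v (z s))"
    using continuous_on_compose2[OF continuous_on_v assms(1)] by blast
  then have "((\<lambda>u. integral {t-r..u} (\<lambda>s. v (z s))) has_real_derivative v (z s)) (at s within {t-r..t})"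
    if "s \<in> {t-r..t}" for s
    using integral_has_real_derivative that by blast
  from delay_bounds[OF this] show ?thesis
    unfolding d_def by blast
qed

lemma is_sol_continuous_on:
  assumes "is_sol \<beta> \<mu> \<gamma> a g v r \<phi> T x" "ereal b < T"
  shows "continuous_on {-r..b} x"
proof -
  obtain x' where "\<And>t. -r \<le> t \<and> ereal t < T \<Longrightarrow>
      (x has_real_derivative x' t) (at t within {s. -r \<le> s \<and> ereal s < T})"
    using assms(1) unfolding is_sol_def by blast
  then have "continuous_on {s. -r \<le> s \<and> ereal s < T} x"
    by (intro DERIV_continuous_on) auto
  moreover have "{-r..b} \<subseteq> {s. -r \<le> s \<and> ereal s < T}"
    using assms(2) by (auto intro: ereal_le_less_trans)
  ultimately show ?thesis
    by (rule continuous_on_subset)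
qed

lemma is_sol_delay_bounds:
  assumes "is_sol \<beta> \<mu> \<gamma> a g v r \<phi> T x" "0 \<le> t" "ereal t < T"
  defines "d \<equiv> delay v a r (\<lambda>s. x (t + s))"
  shows "0 < d \<and> d < r \<and> a / v\<^sub>U \<le> d \<and> d \<le> a / v\<^sub>0"
  unfolding d_def using assms
  by (intro delay_bounds_continuous continuous_on_subset[OF is_sol_continuous_on]) auto

lemma is_sol_exp_bounds:
  assumes sol: "is_sol \<beta> \<mu> \<gamma> a g v r \<phi> T x" and t: "0 \<le> t" "ereal t < T"
  shows "x t - dU / \<gamma> \<le> (x 0 - dU / \<gamma>) * exp (- \<gamma> * t)"
    and "dL / \<gamma> - x t \<le> (dL / \<gamma> - x 0) * exp (- \<gamma> * t)"
proof -
  have s_lt: "ereal s < T" if "s < t" for s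
    using ereal_le_less_trans[of s t T] that t(2) by simp
  have deriv: "(x has_real_derivative inflow (\<lambda>\<tau>. x (s + \<tau>)) - \<gamma> * x s) (at s)"
    if "0 < s" "s < t" for s
    using sol s_lt[OF that(2)] that unfolding is_sol_def by (simp add: Gfun_eq_inflow)
  have inflow: "dL \<le> inflow (\<lambda>\<tau>. x (s + \<tau>)) \<and> inflow (\<lambda>\<tau>. x (s + \<tau>)) \<le> dU"
    if "0 < s" "s < t" for s
    using is_sol_delay_bounds[OF sol, of s] s_lt[OF that(2)] that by (intro inflow_bounds) auto
  have cont: "continuous_on {0..t} x"
    by (rule continuous_on_subset[OF is_sol_continuous_on[OF sol t(2)]]) (use r_pos in auto)
  show "x t - dU / \<gamma> \<le> (x 0 - dU / \<gamma>) * exp (- \<gamma> * t)"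
    using inflow by (intro linear_differential_inequality_upper[OF \<gamma>_pos t(1) cont deriv]) auto
  show "dL / \<gamma> - x t \<le> (dL / \<gamma> - x 0) * exp (- \<gamma> * t)"
    using inflow by (intro linear_differential_inequality_lower[OF \<gamma>_pos t(1) cont deriv]) auto
qed

lemma is_sol_between:
  assumes sol: "is_sol \<beta> \<mu> \<gamma> a g v r \<phi> T x" and t: "0 \<le> t" "ereal t < T"
  shows "min (x 0) (dL / \<gamma>) \<le> x t \<and> x t \<le> max (x 0) (dU / \<gamma>)"
proof -
  define e where "e = exp (- \<gamma> * t)"
  have e: "0 < e" "e \<le> 1"
    using t \<gamma>_pos by (auto simp: e_def)
  have shrink: "c * e \<le> max c 0" for c
    using e by (cases "c \<le> 0") (auto simp: mult_nonpos_nonneg mult_left_le)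
  have "max (x 0 - dU / \<gamma>) 0 = max (x 0) (dU / \<gamma>) - dU / \<gamma>"
    and "max (dL / \<gamma> - x 0) 0 = dL / \<gamma> - min (x 0) (dL / \<gamma>)"
    by (auto simp: max_def min_def)
  then show ?thesis
    using is_sol_exp_bounds[OF sol t] shrink[of "x 0 - dU / \<gamma>"] shrink[of "dL / \<gamma> - x 0"]
    unfolding e_def[symmetric] by linarith
qed

text \<open>Any history, e.g. a constant one, has a delay within the bounds required by
  \<open>inflow_bounds\<close>.\<close>

lemma dL_le_dU: "dL \<le> dU"
  using delay_bounds_continuous[of 0 "\<lambda>_. 0"] v\<^sub>0_pos v\<^sub>U_pos a_pos inflow_bounds[of "\<lambda>_. 0"]
  by (auto simp: divide_pos_pos)

lemma is_sol_eventually_in_open: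
  assumes sol: "is_sol \<beta> \<mu> \<gamma> a g v r \<phi> \<infinity> x"
    and U: "open U" "{dL / \<gamma>..dU / \<gamma>} \<subseteq> U"
  shows "\<exists>t\<^sub>0\<ge>0. \<forall>t\<ge>t\<^sub>0. x t \<in> U"
proof -
  obtain e where e: "0 < e" "(\<Union>y\<in>{dL / \<gamma>..dU / \<gamma>}. ball y e) \<subseteq> U"
    using compact_subset_open_imp_ball_epsilon_subset[OF compact_Icc U] by blast
  have interval: "dL / \<gamma> \<le> dU / \<gamma>"
    using dL_le_dU \<gamma>_pos by (simp add: divide_right_mono)
  have decay: "((\<lambda>t. c * exp (- \<gamma> * t)) \<longlongrightarrow> 0) at_top" for c
    using \<gamma>_pos by real_asymp
  have "\<forall>\<^sub>F t in at_top. 0 \<le> t \<and> (x 0 - dU / \<gamma>) * exp (- \<gamma> * t) < e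
      \<and> (dL / \<gamma> - x 0) * exp (- \<gamma> * t) < e"
    using e(1) by (intro eventually_conj eventually_ge_at_top order_tendstoD(2)[OF decay])
  then have "\<forall>\<^sub>F t in at_top. x t \<in> U"
  proof (rule eventually_mono)
    fix t assume t: "0 \<le> t \<and> (x 0 - dU / \<gamma>) * exp (- \<gamma> * t) < e \<and> (dL / \<gamma> - x 0) * exp (- \<gamma> * t) < e"
    then have "dL / \<gamma> - e < x t" "x t < dU / \<gamma> + e"
      using is_sol_exp_bounds[OF sol, of t] by auto
    then have "\<exists>y\<in>{dL / \<gamma>..dU / \<gamma>}. dist y (x t) < e"
      using interval e(1)
      by (cases "x t < dL / \<gamma>"; cases "dU / \<gamma> < x t")
         (force simp: dist_real_def intro: bexI[of _ "dL / \<gamma>"] bexI[of _ "dU / \<gamma>"] bexI[of _ "x t"])+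
    then have "x t \<in> (\<Union>y\<in>{dL / \<gamma>..dU / \<gamma>}. ball y e)"
      by auto
    then show "x t \<in> U"
      using e(2) by blast
  qed
  then obtain t\<^sub>0 where "\<forall>t\<ge>t\<^sub>0. x t \<in> U"
    by (auto simp: eventually_at_top_linorder)
  then show ?thesis
    by (intro exI[of _ "max t\<^sub>0 0"]) auto
qed

lemma is_sol_invariant_interval:
  assumes sol: "is_sol \<beta> \<mu> \<gamma> a g v r \<phi> T x" and "\<forall>s\<in>{-r..0}. \<phi> s \<in> {dL / \<gamma>..dU / \<gamma>}"
    and t: "0 \<le> t" "ereal t < T"
  shows "x t \<in> {dL / \<gamma>..dU / \<gamma>}"
proof -
  have "x 0 \<in> {dL / \<gamma>..dU / \<gamma>}"
    using assms(2) sol r_pos by (auto simp: is_sol_def)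
  then show ?thesis
    using is_sol_between[OF sol t] by (auto simp: min_def max_def split: if_splits)
qed

lemma is_sol_positive:
  assumes sol: "is_sol \<beta> \<mu> \<gamma> a g v r \<phi> T x" and pos: "\<forall>s\<in>{-r..0}. \<phi> s > 0"
    and t: "-r \<le> t" "ereal t < T"
  shows "x t > 0"
proof (cases "t \<le> 0")
  case True
  then show ?thesis
    using sol pos t by (auto simp: is_sol_def)
next
  case False
  have "x 0 > 0" "dL / \<gamma> > 0"
    using sol pos r_pos dL_pos \<gamma>_pos by (auto simp: is_sol_def)
  then show ?thesis
    using is_sol_between[OF sol _ t(2)] False by (smt (verit) min_def)
qed

end

section \<open>Continuation of solutions beyond a finite time\<close>

locale finite_sol = sdde +
  fixes \<phi> x x' :: "real \<Rightarrow> real" and T\<^sub>0 :: real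
  assumes sol: "is_sol \<beta> \<mu> \<gamma> a g v r \<phi> (ereal T\<^sub>0) x"
    and x_deriv: "\<And>t. t \<in> {-r..<T\<^sub>0} \<Longrightarrow> (x has_real_derivative x' t) (at t within {-r..<T\<^sub>0})"
    and x'_cont: "continuous_on {-r..<T\<^sub>0} x'"
begin

lemma T\<^sub>0_pos: "0 < T\<^sub>0"
  using sol by (simp add: is_sol_def)

lemma x'_eq_Gfun:
  assumes "0 < t" "t < T\<^sub>0"
  shows "x' t = Gfun \<beta> \<mu> \<gamma> a g v r (\<lambda>s. x (t + s))"
proof -
  have "at t within {-r..<T\<^sub>0} = at t"
    by (rule at_within_interior) (use assms r_pos in auto)
  then have "(x has_real_derivative x' t) (at t)"
    using x_deriv[of t] assms r_pos by auto
  moreover have "(x has_real_derivative Gfun \<beta> \<mu> \<gamma> a g v r (\<lambda>s. x (t + s))) (at t)"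
    using sol assms unfolding is_sol_def by auto
  ultimately show ?thesis
    by (rule DERIV_unique)
qed

lemma x'_bounded:
  obtains B where "0 \<le> B" "\<forall>t\<in>{-r..<T\<^sub>0}. \<bar>x' t\<bar> \<le> B"
proof -
  have "bounded (x' ` {-r..0})"
    using T\<^sub>0_pos by (intro compact_imp_bounded compact_continuous_image continuous_on_subset[OF x'_cont]) auto
  then obtain B\<^sub>1 where B\<^sub>1: "\<forall>y\<in>x' ` {-r..0}. \<bar>y\<bar> \<le> B\<^sub>1"
    unfolding bounded_real by blast
  define M where "M = \<bar>x 0\<bar> + dU / \<gamma>"
  have "\<bar>x' t\<bar> \<le> dU + \<gamma> * M" if t: "0 < t" "t < T\<^sub>0" for t
  proof -
    have "min (x 0) (dL / \<gamma>) \<le> x t \<and> x t \<le> max (x 0) (dU / \<gamma>)"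
      using is_sol_between[OF sol] t by simp
    moreover have "0 < dL / \<gamma>" "0 < dU / \<gamma>"
      using dL_pos dU_pos \<gamma>_pos by simp_all
    ultimately have "\<bar>x t\<bar> \<le> M"
      unfolding M_def by (smt (verit) min_def max_def)
    moreover have "dL \<le> inflow (\<lambda>s. x (t + s)) \<and> inflow (\<lambda>s. x (t + s)) \<le> dU"
      using is_sol_delay_bounds[OF sol, of t] t by (intro inflow_bounds) auto
    moreover have "\<bar>\<gamma> * x t\<bar> \<le> \<gamma> * M"
      using \<open>\<bar>x t\<bar> \<le> M\<close> \<gamma>_pos by (simp add: abs_mult mult_left_mono)
    ultimately show ?thesis
      using x'_eq_Gfun[OF t] dL_pos by (auto simp: Gfun_eq_inflow abs_le_iff)
  qed
  then have bound: "\<bar>x' t\<bar> \<le> max B\<^sub>1 (dU + \<gamma> * M)" if "t \<in> {-r..<T\<^sub>0}" for t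
    using B\<^sub>1 that by (cases "t \<le> 0") (auto simp: le_max_iff_disj)
  have "0 \<le> max B\<^sub>1 (dU + \<gamma> * M)"
    using B\<^sub>1 r_pos by (force simp: le_max_iff_disj)
  with bound show ?thesis
    using that by blast
qed

lemma x_lipschitz:
  obtains K where "K-lipschitz_on {-r..<T\<^sub>0} x"
proof -
  obtain B where "0 \<le> B" "\<forall>t\<in>{-r..<T\<^sub>0}. \<bar>x' t\<bar> \<le> B"
    by (rule x'_bounded)
  then have "B-lipschitz_on {-r..<T\<^sub>0} x"
    by (intro lipschitz_on_interval_if_derivative_bounded[OF _ _ x_deriv]) (auto simp: is_interval_convex_1)
  then show ?thesis ..
qed

definition xe :: "real \<Rightarrow> real" where
  "xe = (SOME y. (\<exists>K. K-lipschitz_on {-r..T\<^sub>0} y) \<and> (\<forall>t\<in>{-r..<T\<^sub>0}. y t = x t))"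

lemma
  shows xe_lipschitz: "\<exists>K. K-lipschitz_on {-r..T\<^sub>0} xe"
    and xe_eq: "t \<in> {-r..<T\<^sub>0} \<Longrightarrow> xe t = x t"
proof -
  obtain K where "K-lipschitz_on {-r..<T\<^sub>0} x"
    by (rule x_lipschitz)
  from lipschitz_extend_closure[OF this]
  have "\<exists>y. (\<exists>K. K-lipschitz_on {-r..T\<^sub>0} y) \<and> (\<forall>t\<in>{-r..<T\<^sub>0}. y t = x t)"
    using T\<^sub>0_pos r_pos by auto
  from someI_ex[OF this, folded xe_def]
  show "\<exists>K. K-lipschitz_on {-r..T\<^sub>0} xe" "t \<in> {-r..<T\<^sub>0} \<Longrightarrow> xe t = x t"
    by auto
qed

lemma continuous_on_xe: "continuous_on {-r..T\<^sub>0} xe"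
  using xe_lipschitz lipschitz_on_continuous_on by blast

definition V :: "real \<Rightarrow> real" where
  "V s = integral {-r..s} (\<lambda>\<tau>. v (xe \<tau>))"

lemma V_deriv: "s \<in> {-r..T\<^sub>0} \<Longrightarrow> (V has_real_derivative v (xe s)) (at s within {-r..T\<^sub>0})"
  unfolding V_def[abs_def]
  by (rule integral_has_real_derivative) (auto intro: continuous_on_compose2[OF continuous_on_v continuous_on_xe])

lemma V_increment_bounds:
  "-r \<le> p \<Longrightarrow> p \<le> q \<Longrightarrow> q \<le> T\<^sub>0 \<Longrightarrow> v\<^sub>0 * (q - p) \<le> V q - V p \<and> V q - V p \<le> v\<^sub>U * (q - p)"
  by (rule antiderivative_increment_bounds[OF V_deriv])

text \<open>\<open>\<theta> t\<close> is the time whose state is fed back at time \<open>t\<close>.\<close>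

definition \<theta> :: "real \<Rightarrow> real" where
  "\<theta> t = t - delay v a r (\<lambda>s. xe (t + s))"

lemma theta_bounds:
  assumes "t \<in> {0..T\<^sub>0}"
  shows "t - a / v\<^sub>0 \<le> \<theta> t \<and> \<theta> t \<le> t - a / v\<^sub>U \<and> V t - V (\<theta> t) = a"
proof -
  have "(V has_real_derivative v (xe s)) (at s within {t-r..t})" if "s \<in> {t-r..t}" for s
    using that assms by (intro DERIV_subset[OF V_deriv]) auto
  from delay_bounds[OF this] show ?thesis
    unfolding \<theta>_def by auto
qed

lemma theta_window: "t \<in> {0..T\<^sub>0} \<Longrightarrow> t - r < \<theta> t \<and> \<theta> t < t"
  using theta_bounds[of t] r_gt a_pos v\<^sub>U_pos by (smt (verit) divide_pos_pos)

lemma theta_lipschitz: "(v\<^sub>U / v\<^sub>0)-lipschitz_on {0..T\<^sub>0} \<theta>"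
proof (rule lipschitz_on_leI)
  fix t\<^sub>1 t\<^sub>2 assume t: "t\<^sub>1 \<in> {0..T\<^sub>0}" "t\<^sub>2 \<in> {0..T\<^sub>0}" "t\<^sub>1 \<le> t\<^sub>2"
  have b: "t\<^sub>1 - r < \<theta> t\<^sub>1" "t\<^sub>2 - r < \<theta> t\<^sub>2" "\<theta> t\<^sub>1 < T\<^sub>0" "\<theta> t\<^sub>2 < T\<^sub>0"
    and same: "V (\<theta> t\<^sub>2) - V (\<theta> t\<^sub>1) = V t\<^sub>2 - V t\<^sub>1"
    using theta_bounds[OF t(1)] theta_bounds[OF t(2)] theta_window[OF t(1)] theta_window[OF t(2)] t
    by auto
  have "\<theta> t\<^sub>1 \<le> \<theta> t\<^sub>2"
  proof (rule ccontr)
    assume "\<not> \<theta> t\<^sub>1 \<le> \<theta> t\<^sub>2"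
    then have "0 < v\<^sub>0 * (\<theta> t\<^sub>1 - \<theta> t\<^sub>2)" "v\<^sub>0 * (\<theta> t\<^sub>1 - \<theta> t\<^sub>2) \<le> V (\<theta> t\<^sub>1) - V (\<theta> t\<^sub>2)"
      using V_increment_bounds[of "\<theta> t\<^sub>2" "\<theta> t\<^sub>1"] v\<^sub>0_pos b t by auto
    moreover have "0 \<le> V t\<^sub>2 - V t\<^sub>1"
      using V_increment_bounds[of t\<^sub>1 t\<^sub>2] v\<^sub>0_pos t r_pos by (smt (verit) atLeastAtMost_iff mult_nonneg_nonneg)
    ultimately show False
      using same by linarith
  qed
  then have "v\<^sub>0 * (\<theta> t\<^sub>2 - \<theta> t\<^sub>1) \<le> v\<^sub>U * (t\<^sub>2 - t\<^sub>1)"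
    using V_increment_bounds[of "\<theta> t\<^sub>1" "\<theta> t\<^sub>2"] V_increment_bounds[of t\<^sub>1 t\<^sub>2] same b t r_pos by auto
  then show "dist (\<theta> t\<^sub>1) (\<theta> t\<^sub>2) \<le> v\<^sub>U / v\<^sub>0 * dist t\<^sub>1 t\<^sub>2"
    using \<open>\<theta> t\<^sub>1 \<le> \<theta> t\<^sub>2\<close> t v\<^sub>0_pos by (simp add: dist_real_def field_simps)
qed (use v\<^sub>0_pos v\<^sub>U_pos in simp)

lemma continuous_on_theta: "continuous_on {0..T\<^sub>0} \<theta>"
  using lipschitz_on_continuous_on[OF theta_lipschitz] .

text \<open>Right-hand sides of the system \<open>x' = X_rate t x \<Theta>\<close>, \<open>\<Theta>' = Theta_rate x \<Theta>\<close> obeyed by the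
  solution and its delayed time \<open>\<Theta> = \<theta> t\<close>; the delayed state is read off the known past \<open>xe\<close>.\<close>

definition Theta_rate :: "real \<Rightarrow> real \<Rightarrow> real" where
  "Theta_rate X \<Theta> = v X / v (xe \<Theta>)"

definition X_rate :: "real \<Rightarrow> real \<Rightarrow> real \<Rightarrow> real" where
  "X_rate t X \<Theta> = \<beta> * exp (-\<mu> * (t - \<Theta>)) * Theta_rate X \<Theta> * g (xe \<Theta>) - \<gamma> * X"

lemma Gfun_xe_segment: "Gfun \<beta> \<mu> \<gamma> a g v r (\<lambda>s. xe (t + s)) = X_rate t (xe t) (\<theta> t)"
  by (simp add: Gfun_def X_rate_def Theta_rate_def \<theta>_def Let_def)

lemma x'_eq_X_rate:
  assumes "0 < t" "t < T\<^sub>0"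
  shows "x' t = X_rate t (xe t) (\<theta> t)"
proof -
  have "Gfun \<beta> \<mu> \<gamma> a g v r (\<lambda>s. x (t + s)) = Gfun \<beta> \<mu> \<gamma> a g v r (\<lambda>s. xe (t + s))"
    using assms is_sol_delay_bounds[OF sol, of t] by (intro Gfun_cong) (auto simp: xe_eq)
  then show ?thesis
    using x'_eq_Gfun[OF assms] by (simp add: Gfun_xe_segment)
qed

lemma continuous_on_X_rate_theta: "continuous_on {0..T\<^sub>0} (\<lambda>t. X_rate t (xe t) (\<theta> t))"
proof -
  have "continuous_on {0..T\<^sub>0} (\<lambda>t. xe (\<theta> t))"
    using theta_window r_pos
    by (intro continuous_on_compose2[OF continuous_on_xe continuous_on_theta]) fastforce
  moreover have "continuous_on {0..T\<^sub>0} xe"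
    using continuous_on_subset[OF continuous_on_xe] r_pos by auto
  ultimately show ?thesis
    unfolding X_rate_def Theta_rate_def using v_pos
    by (intro continuous_intros continuous_on_theta continuous_on_compose2[OF continuous_on_v]
        continuous_on_compose2[OF continuous_on_g]) (auto simp: less_imp_neq[OF v_pos, symmetric])
qed

lemma xe_integral_representation:
  assumes t: "t \<in> {T\<^sub>0/2..T\<^sub>0}"
  shows "xe t = xe (T\<^sub>0/2) + integral {T\<^sub>0/2..t} (\<lambda>s. X_rate s (xe s) (\<theta> s))"
proof -
  define H where "H s = X_rate s (xe s) (\<theta> s)" for s
  define T\<^sub>1 where "T\<^sub>1 = T\<^sub>0 / 2"
  have T\<^sub>1: "0 < T\<^sub>1" "T\<^sub>1 < T\<^sub>0"
    using T\<^sub>0_pos by (auto simp: T\<^sub>1_def)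
  have "xe t - integral {T\<^sub>1..t} H = xe T\<^sub>1" if t: "t \<in> {T\<^sub>1..<T\<^sub>0}" for t
  proof -
    have sub: "{T\<^sub>1..t} \<subseteq> {-r..<T\<^sub>0}"
      using t T\<^sub>1 r_pos by auto
    have "(x has_real_derivative H s) (at s within {T\<^sub>1..t})" if s: "s \<in> {T\<^sub>1..t}" for s
    proof -
      have "(x has_real_derivative x' s) (at s within {T\<^sub>1..t})"
        by (rule DERIV_subset[OF x_deriv sub]) (use s sub in auto)
      then show ?thesis
        using x'_eq_X_rate[of s] s t T\<^sub>1 by (simp add: H_def)
    qed
    then have "(H has_integral (x t - x T\<^sub>1)) {T\<^sub>1..t}"
      using t by (intro fundamental_theorem_of_calculus) (auto simp: has_real_derivative_iff_has_vector_derivative)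
    then show ?thesis
      using t T\<^sub>1 r_pos by (simp add: integral_unique xe_eq)
  qed
  moreover have "continuous_on {T\<^sub>1..T\<^sub>0} (\<lambda>t. xe t - integral {T\<^sub>1..t} H)"
    unfolding H_def using T\<^sub>1 r_pos
    by (intro continuous_intros continuous_on_subset[OF continuous_on_xe] indefinite_integral_continuous_1
        integrable_continuous_real continuous_on_subset[OF continuous_on_X_rate_theta]) auto
  ultimately have "xe t - integral {T\<^sub>1..t} H = xe T\<^sub>1"
    using continuous_constant_on_closure[of "{T\<^sub>1..<T\<^sub>0}" "\<lambda>t. xe t - integral {T\<^sub>1..t} H" "xe T\<^sub>1" t] t T\<^sub>1
    by (auto simp: T\<^sub>1_def)
  then show ?thesis
    unfolding H_def[abs_def] T\<^sub>1_def by linarith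
qed

lemma xe_left_deriv: "(xe has_real_derivative X_rate T\<^sub>0 (xe T\<^sub>0) (\<theta> T\<^sub>0)) (at T\<^sub>0 within {T\<^sub>0/2..T\<^sub>0})"
proof -
  have "continuous_on {T\<^sub>0/2..T\<^sub>0} (\<lambda>s. X_rate s (xe s) (\<theta> s))"
    using T\<^sub>0_pos by (intro continuous_on_subset[OF continuous_on_X_rate_theta]) auto
  then have "((\<lambda>t. integral {T\<^sub>0/2..t} (\<lambda>s. X_rate s (xe s) (\<theta> s))) has_real_derivative
      X_rate T\<^sub>0 (xe T\<^sub>0) (\<theta> T\<^sub>0)) (at T\<^sub>0 within {T\<^sub>0/2..T\<^sub>0})"
    by (rule integral_has_real_derivative) (use T\<^sub>0_pos in auto)
  from DERIV_add[OF DERIV_const[of "xe (T\<^sub>0/2)"] this]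
  have "((\<lambda>t. xe (T\<^sub>0/2) + integral {T\<^sub>0/2..t} (\<lambda>s. X_rate s (xe s) (\<theta> s))) has_real_derivative
      X_rate T\<^sub>0 (xe T\<^sub>0) (\<theta> T\<^sub>0)) (at T\<^sub>0 within {T\<^sub>0/2..T\<^sub>0})"
    by simp
  then show ?thesis
    unfolding has_real_derivative_iff_has_vector_derivative
  proof (rule has_vector_derivative_transform[rotated 2])
    show "T\<^sub>0 \<in> {T\<^sub>0/2..T\<^sub>0}"
      using T\<^sub>0_pos by simp
  qed (rule xe_integral_representation)
qed

text \<open>Clamping both variables makes the right-hand side globally Lipschitz; the clamps turn out to be
  inactive along the solution for a short time.\<close>

definition clamp_X :: "real \<times> real \<Rightarrow> real" where
  "clamp_X z = clamp (xe T\<^sub>0 - 1) (xe T\<^sub>0 + 1) (fst z)"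

definition clamp_Theta :: "real \<times> real \<Rightarrow> real" where
  "clamp_Theta z = clamp (-r) T\<^sub>0 (snd z)"

definition aux_field :: "real \<Rightarrow> real \<times> real \<Rightarrow> real \<times> real" where
  "aux_field t z = (X_rate t (clamp_X z) (clamp_Theta z), Theta_rate (clamp_X z) (clamp_Theta z))"

lemma clamp_Theta_range: "clamp_Theta z \<in> {-r..T\<^sub>0}"
  unfolding clamp_Theta_def using T\<^sub>0_pos r_pos by (intro clamp_real_in_interval) simp

lemma clamp_X_range: "clamp_X z \<in> {xe T\<^sub>0 - 1..xe T\<^sub>0 + 1}"
  unfolding clamp_X_def by (intro clamp_real_in_interval) simp

lemma lipschitz_on_clamp_X: "1-lipschitz_on U clamp_X"
  unfolding clamp_X_def[abs_def]
  using lipschitz_on_compose2[OF lipschitz_on_fst lipschitz_on_clamp_real] by simp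

lemma lipschitz_on_clamp_Theta: "1-lipschitz_on U clamp_Theta"
  unfolding clamp_Theta_def[abs_def]
  using lipschitz_on_compose2[OF lipschitz_on_snd lipschitz_on_clamp_real] by simp

lemma lipschitz_on_clamped_compose:
  assumes "\<And>y. (F has_real_derivative F' y) (at y)" "continuous_on UNIV F'"
  obtains L where "L-lipschitz_on UNIV (\<lambda>z. F (clamp_X z))"
    and "L-lipschitz_on UNIV (\<lambda>z. F (xe (clamp_Theta z)))"
proof -
  obtain K where K: "K-lipschitz_on {-r..T\<^sub>0} xe"
    using xe_lipschitz by blast
  have "bounded (xe ` {-r..T\<^sub>0})"
    by (intro compact_imp_bounded compact_continuous_image continuous_on_xe) simp
  then obtain M where M: "\<forall>y\<in>xe ` {-r..T\<^sub>0}. \<bar>y\<bar> \<le> M"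
    unfolding bounded_real by blast
  obtain LF where LF: "LF-lipschitz_on {-(M+1)..M+1} F"
    using lipschitz_on_compact_interval_if_C1[OF assms] .
  have "\<bar>xe T\<^sub>0\<bar> \<le> M"
    using M T\<^sub>0_pos r_pos by auto
  then have "clamp_X z \<in> {-(M+1)..M+1}" for z
    using clamp_X_range[of z] by (auto simp: abs_le_iff)
  then have X_range: "clamp_X ` UNIV \<subseteq> {-(M+1)..M+1}"
    by blast
  have "xe (clamp_Theta z) \<in> {-(M+1)..M+1}" for z
    using M[rule_format, OF imageI[OF clamp_Theta_range[of z]]] by (simp add: abs_le_iff)
  then have Theta_range: "(\<lambda>z. xe (clamp_Theta z)) ` UNIV \<subseteq> {-(M+1)..M+1}"
    by blast
  from lipschitz_on_compose2[OF lipschitz_on_clamp_X lipschitz_on_subset[OF LF X_range]]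
  have X_lip: "LF-lipschitz_on UNIV (\<lambda>z. F (clamp_X z))"
    by simp
  have "clamp_Theta ` UNIV \<subseteq> {-r..T\<^sub>0}"
    using clamp_Theta_range by blast
  then have "(K * 1)-lipschitz_on UNIV (\<lambda>z. xe (clamp_Theta z))"
    by (intro lipschitz_on_compose2 lipschitz_on_subset[OF K] lipschitz_on_clamp_Theta)
  from lipschitz_on_compose2[OF this lipschitz_on_subset[OF LF Theta_range]]
  have "(LF * K)-lipschitz_on UNIV (\<lambda>z. F (xe (clamp_Theta z)))"
    by simp
  then show ?thesis
    using that lipschitz_on_le[OF X_lip max.cobounded1] lipschitz_on_le[OF _ max.cobounded2] by blast
qed

lemma Theta_rate_bounds: "v\<^sub>0 / v\<^sub>U \<le> Theta_rate X \<Theta> \<and> Theta_rate X \<Theta> \<le> v\<^sub>U / v\<^sub>0"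
  unfolding Theta_rate_def using v_bounds[of X] v_bounds[of "xe \<Theta>"] v\<^sub>0_pos
  by (auto intro!: frac_le)

lemma X_rate_inflow_bounds:
  assumes "\<Theta> \<le> t"
  shows "0 \<le> X_rate t X \<Theta> + \<gamma> * X \<and> X_rate t X \<Theta> + \<gamma> * X \<le> dU"
proof -
  have q: "0 \<le> Theta_rate X \<Theta>" "Theta_rate X \<Theta> \<le> v\<^sub>U / v\<^sub>0"
    using Theta_rate_bounds[of X \<Theta>] v\<^sub>0_pos v\<^sub>U_pos by (auto intro: order_trans[rotated])
  have "exp (-\<mu> * (t - \<Theta>)) \<le> 1"
    using assms \<mu>_pos by simp
  then have "exp (-\<mu> * (t - \<Theta>)) * Theta_rate X \<Theta> * g (xe \<Theta>) \<le> 1 * (v\<^sub>U / v\<^sub>0) * Sup (range g)"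
    using q g_bounds[of "xe \<Theta>"] g_pos[of "xe \<Theta>"] v\<^sub>0_pos v\<^sub>U_pos by (intro mult_mono) auto
  from mult_left_mono[OF this, of \<beta>]
  have "\<beta> * (exp (-\<mu> * (t - \<Theta>)) * Theta_rate X \<Theta> * g (xe \<Theta>)) \<le> dU"
    using \<beta>_pos unfolding dU_def by (simp add: ac_simps)
  moreover have "0 \<le> \<beta> * (exp (-\<mu> * (t - \<Theta>)) * Theta_rate X \<Theta> * g (xe \<Theta>))"
    using q \<beta>_pos g_pos[of "xe \<Theta>"] by simp
  ultimately show ?thesis
    by (simp add: X_rate_def ac_simps)
qed

lemma lipschitz_on_Theta_rate_clamped:
  obtains L where "L-lipschitz_on UNIV (\<lambda>z. Theta_rate (clamp_X z) (clamp_Theta z))"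
proof -
  obtain Lv where Lv: "Lv-lipschitz_on UNIV (\<lambda>z. v (clamp_X z))"
    "Lv-lipschitz_on UNIV (\<lambda>z. v (xe (clamp_Theta z)))"
    by (rule lipschitz_on_clamped_compose[OF v_deriv v'_cont])
  have "\<bar>1 / v y\<bar> \<le> 1 / v\<^sub>0" "\<bar>v y\<bar> \<le> v\<^sub>U" for y
    using v_bounds[of y] v\<^sub>0_pos v_pos[of y] by (simp_all add: frac_le)
  then have "(v\<^sub>U * (Lv / v\<^sub>0\<^sup>2) + 1 / v\<^sub>0 * Lv)-lipschitz_on UNIV
      (\<lambda>z. v (clamp_X z) * (1 / v (xe (clamp_Theta z))))"
    using v_bounds v\<^sub>0_pos v\<^sub>U_pos
    by (intro lipschitz_on_mult_bounded Lv lipschitz_on_inverse_bounded_below[OF Lv(2) v\<^sub>0_pos]) auto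
  then show ?thesis
    using that by (simp add: Theta_rate_def)
qed

lemma lipschitz_on_exp_delay_clamped:
  assumes "T\<^sub>0 \<le> t"
  shows "\<mu>-lipschitz_on UNIV (\<lambda>z. exp (-\<mu> * (t - clamp_Theta z)))"
proof (rule lipschitz_onI)
  fix z w :: "real \<times> real"
  have nonpos: "-\<mu> * (t - clamp_Theta y) \<in> {..0}" for y
    using clamp_Theta_range[of y] assms \<mu>_pos by (simp add: mult_nonneg_nonneg)
  have "dist (exp (-\<mu> * (t - clamp_Theta z))) (exp (-\<mu> * (t - clamp_Theta w)))
      \<le> 1 * dist (-\<mu> * (t - clamp_Theta z)) (-\<mu> * (t - clamp_Theta w))"
    by (rule lipschitz_onD[OF exp_lipschitz_on_nonpos nonpos nonpos])
  also have "-\<mu> * (t - clamp_Theta z) - -\<mu> * (t - clamp_Theta w) = \<mu> * (clamp_Theta z - clamp_Theta w)"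
    by algebra
  then have "1 * dist (-\<mu> * (t - clamp_Theta z)) (-\<mu> * (t - clamp_Theta w))
      = \<mu> * dist (clamp_Theta z) (clamp_Theta w)"
    using \<mu>_pos by (simp add: dist_real_def abs_mult)
  also have "\<dots> \<le> \<mu> * dist z w"
    using lipschitz_onD[OF lipschitz_on_clamp_Theta[of UNIV] UNIV_I UNIV_I, of z w] \<mu>_pos
    by (simp add: mult_left_mono)
  finally show "dist (exp (-\<mu> * (t - clamp_Theta z))) (exp (-\<mu> * (t - clamp_Theta w))) \<le> \<mu> * dist z w" .
qed (use \<mu>_pos in simp)

lemma aux_field_lipschitz:
  obtains L where "\<forall>t\<ge>T\<^sub>0. L-lipschitz_on UNIV (aux_field t)"
proof -
  define q where "q z = Theta_rate (clamp_X z) (clamp_Theta z)" for z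
  define E where "E t z = exp (-\<mu> * (t - clamp_Theta z))" for t z
  define G where "G z = g (xe (clamp_Theta z))" for z
  obtain Lq where Lq: "Lq-lipschitz_on UNIV q"
    unfolding q_def by (rule lipschitz_on_Theta_rate_clamped)
  obtain LG where LG: "LG-lipschitz_on UNIV G"
    unfolding G_def by (rule lipschitz_on_clamped_compose[OF g_deriv g'_cont])
  have q_bound: "\<bar>q z\<bar> \<le> v\<^sub>U / v\<^sub>0" for z
    unfolding q_def using Theta_rate_bounds v\<^sub>0_pos v\<^sub>U_pos
    by (smt (verit) divide_pos_pos)
  have G_bound: "\<bar>G z\<bar> \<le> Sup (range g)" for z
    unfolding G_def using g_bounds g_pos by (simp add: abs_of_pos)
  define L\<^sub>1 where "L\<^sub>1 = \<beta> * (v\<^sub>U / v\<^sub>0 * LG + Sup (range g) * (1 * Lq + v\<^sub>U / v\<^sub>0 * \<mu>)) + \<gamma> * 1"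
  have "(sqrt (L\<^sub>1\<^sup>2 + Lq\<^sup>2))-lipschitz_on UNIV (aux_field t)" if t: "T\<^sub>0 \<le> t" for t
  proof -
    have E_bound: "\<bar>E t z\<bar> \<le> 1" for z
      unfolding E_def using clamp_Theta_range[of z] t \<mu>_pos by (simp add: mult_nonneg_nonneg)
    have "(1 * Lq + v\<^sub>U / v\<^sub>0 * \<mu>)-lipschitz_on UNIV (\<lambda>z. E t z * q z)"
      unfolding E_def using lipschitz_on_exp_delay_clamped[OF t] v\<^sub>0_pos v\<^sub>U_pos
      by (intro lipschitz_on_mult_bounded Lq q_bound E_bound[unfolded E_def]) auto
    then have "(v\<^sub>U / v\<^sub>0 * LG + Sup (range g) * (1 * Lq + v\<^sub>U / v\<^sub>0 * \<mu>))-lipschitz_on UNIV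
        (\<lambda>z. E t z * q z * G z)"
      using E_bound q_bound G_bound v\<^sub>0_pos v\<^sub>U_pos g_bounds[of 0] g_pos[of 0]
      by (intro lipschitz_on_mult_bounded[OF _ LG])
         (auto simp: abs_mult intro: order_trans[OF mult_mono[of _ 1 _ "v\<^sub>U / v\<^sub>0"]])
    then have "L\<^sub>1-lipschitz_on UNIV (\<lambda>z. \<beta> * (E t z * q z * G z) - \<gamma> * clamp_X z)"
      unfolding L\<^sub>1_def using \<beta>_pos \<gamma>_pos
      by (intro lipschitz_on_diff lipschitz_on_cmult_real_nonneg lipschitz_on_clamp_X) auto
    from lipschitz_on_Pair[OF this Lq] show ?thesis
      by (simp add: aux_field_def X_rate_def q_def E_def G_def ac_simps)
  qed
  then show ?thesis
    using that by blast
qed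

lemma continuous_on_aux_field:
  assumes "continuous_on A w"
  shows "continuous_on A (\<lambda>s. aux_field s (w s))"
proof -
  have X: "continuous_on A (\<lambda>s. clamp_X (w s))"
    using continuous_on_compose2[OF lipschitz_on_continuous_on[OF lipschitz_on_clamp_X] assms] by blast
  have \<Theta>: "continuous_on A (\<lambda>s. clamp_Theta (w s))"
    using continuous_on_compose2[OF lipschitz_on_continuous_on[OF lipschitz_on_clamp_Theta] assms] by blast
  have "continuous_on A (\<lambda>s. xe (clamp_Theta (w s)))"
    by (rule continuous_on_compose2[OF continuous_on_xe \<Theta>]) (use clamp_Theta_range in blast)
  then show ?thesis
    unfolding aux_field_def X_rate_def Theta_rate_def
    by (intro continuous_intros X \<Theta> continuous_on_compose2[OF continuous_on_v]
        continuous_on_compose2[OF continuous_on_g]) (auto simp: less_imp_neq[OF v_pos, symmetric])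
qed

lemma aux_field_fst_bound:
  assumes "T\<^sub>0 \<le> t"
  shows "\<bar>fst (aux_field t z)\<bar> \<le> dU + \<gamma> * (\<bar>xe T\<^sub>0\<bar> + 1)"
proof -
  have "clamp_Theta z \<le> t"
    using clamp_Theta_range[of z] assms by simp
  from X_rate_inflow_bounds[OF this, of "clamp_X z"]
  have "\<bar>X_rate t (clamp_X z) (clamp_Theta z)\<bar> \<le> dU + \<bar>\<gamma> * clamp_X z\<bar>"
    by linarith
  then have "\<bar>X_rate t (clamp_X z) (clamp_Theta z)\<bar> \<le> dU + \<gamma> * \<bar>clamp_X z\<bar>"
    using \<gamma>_pos by (simp add: abs_mult)
  moreover have "\<bar>clamp_X z\<bar> \<le> \<bar>xe T\<^sub>0\<bar> + 1"
    using clamp_X_range[of z] by (auto simp: abs_le_iff)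
  ultimately show ?thesis
    using \<gamma>_pos by (simp add: aux_field_def) (smt (verit) mult_left_mono)
qed

lemma aux_clamped_solution:
  obtains h u where "0 < h" "h * (dU + \<gamma> * (\<bar>xe T\<^sub>0\<bar> + 1)) < 1"
    "v\<^sub>U / v\<^sub>0 * h \<le> a / v\<^sub>U" "h < r - a / v\<^sub>0"
    and "u T\<^sub>0 = (xe T\<^sub>0, \<theta> T\<^sub>0)"
    and "\<forall>t\<in>{T\<^sub>0..T\<^sub>0+h}. (u has_vector_derivative aux_field t (u t)) (at t within {T\<^sub>0..T\<^sub>0+h})"
proof -
  obtain L where "\<forall>t\<ge>T\<^sub>0. L-lipschitz_on UNIV (aux_field t)"
    by (rule aux_field_lipschitz)
  then have L: "L-lipschitz_on UNIV (aux_field t)" if "t \<in> {T\<^sub>0..T\<^sub>0+h}" for t h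
    using that by simp
  define B where "B = dU + \<gamma> * (\<bar>xe T\<^sub>0\<bar> + 1)"
  \<comment> \<open>Besides the contraction condition, \<open>h\<close> is small enough that \<open>X\<close> cannot leave its clamp,
    that \<open>\<Theta>\<close>, starting at \<open>\<theta> T\<^sub>0 \<le> T\<^sub>0 - a / v\<^sub>U\<close>, stays below \<open>T\<^sub>0\<close>, and that the delay stays
    below \<open>r\<close>.\<close>
  have small: "\<forall>\<^sub>F h in at_right 0. h * c < d" if "0 < d" for c d :: real
    using that by (intro order_tendstoD(2)[of _ 0]) (auto intro!: tendsto_eq_intros)
  have "\<forall>\<^sub>F h in at_right 0. 0 < h \<and> h * L < 1 \<and> h * B < 1 \<and> h * (v\<^sub>U / v\<^sub>0) < a / v\<^sub>U
      \<and> h * 1 < r - a / v\<^sub>0"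
    using a_pos v\<^sub>U_pos r_gt by (intro eventually_conj eventually_at_right_less small) auto
  from eventually_happens'[OF trivial_limit_at_right_real this]
  obtain h where h: "0 < h" "h * L < 1" "h * B < 1" "h * (v\<^sub>U / v\<^sub>0) < a / v\<^sub>U" "h * 1 < r - a / v\<^sub>0"
    by blast
  then have "v\<^sub>U / v\<^sub>0 * h \<le> a / v\<^sub>U" "h < r - a / v\<^sub>0"
    by (simp_all add: mult.commute)
  moreover obtain u where "u T\<^sub>0 = (xe T\<^sub>0, \<theta> T\<^sub>0)"
    "\<forall>t\<in>{T\<^sub>0..T\<^sub>0+h}. (u has_vector_derivative aux_field t (u t)) (at t within {T\<^sub>0..T\<^sub>0+h})"
    by (rule picard_local_existence[OF h(1,2) L continuous_on_aux_field])
  ultimately show ?thesis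
    using that h(1,3) unfolding B_def by blast
qed

lemma aux_clamped_solution_ranges:
  assumes h: "h * (dU + \<gamma> * (\<bar>xe T\<^sub>0\<bar> + 1)) < 1" "v\<^sub>U / v\<^sub>0 * h \<le> a / v\<^sub>U" "h < r - a / v\<^sub>0"
    and u0: "u T\<^sub>0 = (xe T\<^sub>0, \<theta> T\<^sub>0)"
    and u': "\<forall>t\<in>{T\<^sub>0..T\<^sub>0+h}. (u has_vector_derivative aux_field t (u t)) (at t within {T\<^sub>0..T\<^sub>0+h})"
    and t: "t \<in> {T\<^sub>0..T\<^sub>0+h}"
  shows "fst (u t) \<in> {xe T\<^sub>0 - 1..xe T\<^sub>0 + 1} \<and> t - r < snd (u t) \<and> snd (u t) \<le> T\<^sub>0"
proof -
  define B where "B = dU + \<gamma> * (\<bar>xe T\<^sub>0\<bar> + 1)"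
  have deriv: "((\<lambda>t. fst (u t)) has_real_derivative fst (aux_field s (u s))) (at s within {T\<^sub>0..t})"
    "((\<lambda>t. snd (u t)) has_real_derivative snd (aux_field s (u s))) (at s within {T\<^sub>0..t})"
    if "s \<in> {T\<^sub>0..t}" for s
    using has_vector_derivative_fst_snd[OF has_vector_derivative_within_subset[OF u'[rule_format, of s]]]
      that t by auto
  have "(-B) * (t - T\<^sub>0) \<le> fst (u t) - fst (u T\<^sub>0) \<and> fst (u t) - fst (u T\<^sub>0) \<le> B * (t - T\<^sub>0)"
  proof (rule increment_bounds_from_derivative_bounds[OF _ deriv(1)])
    fix s assume "s \<in> {T\<^sub>0..t}"
    then show "-B \<le> fst (aux_field s (u s)) \<and> fst (aux_field s (u s)) \<le> B"
      using aux_field_fst_bound[of s "u s"] unfolding B_def by (auto simp: abs_le_iff)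
  qed (use t in auto)
  then have "\<bar>fst (u t) - fst (u T\<^sub>0)\<bar> \<le> B * (t - T\<^sub>0)"
    by (auto simp: abs_le_iff)
  moreover have "B * (t - T\<^sub>0) \<le> B * h"
    using t dU_pos \<gamma>_pos by (intro mult_left_mono) (auto simp: B_def)
  moreover have "B * h < 1"
    using h(1) by (simp add: B_def mult.commute)
  ultimately have "fst (u t) \<in> {xe T\<^sub>0 - 1..xe T\<^sub>0 + 1}"
    using u0 by (auto simp: abs_le_iff)
  have "v\<^sub>0 / v\<^sub>U * (t - T\<^sub>0) \<le> snd (u t) - snd (u T\<^sub>0) \<and> snd (u t) - snd (u T\<^sub>0) \<le> v\<^sub>U / v\<^sub>0 * (t - T\<^sub>0)"
    by (rule increment_bounds_from_derivative_bounds[OF _ deriv(2)])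
       (use t in \<open>auto simp: aux_field_def Theta_rate_bounds\<close>)
  moreover have "v\<^sub>U / v\<^sub>0 * (t - T\<^sub>0) \<le> v\<^sub>U / v\<^sub>0 * h"
    using t v\<^sub>0_pos v\<^sub>U_pos by (intro mult_left_mono) auto
  moreover have "0 \<le> v\<^sub>0 / v\<^sub>U * (t - T\<^sub>0)"
    using t v\<^sub>0_pos v\<^sub>U_pos by simp
  ultimately have "t - r < snd (u t) \<and> snd (u t) \<le> T\<^sub>0"
    using theta_bounds[of T\<^sub>0] T\<^sub>0_pos t h(2,3) u0 by auto
  with \<open>fst (u t) \<in> {xe T\<^sub>0 - 1..xe T\<^sub>0 + 1}\<close> show ?thesis
    by blast
qed

lemma aux_local_solution:
  obtains h X \<Theta> where "0 < h" "X T\<^sub>0 = xe T\<^sub>0" "\<Theta> T\<^sub>0 = \<theta> T\<^sub>0"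
    and "\<forall>t\<in>{T\<^sub>0..T\<^sub>0+h}. (X has_real_derivative X_rate t (X t) (\<Theta> t)) (at t within {T\<^sub>0..T\<^sub>0+h})"
    and "\<forall>t\<in>{T\<^sub>0..T\<^sub>0+h}. (\<Theta> has_real_derivative Theta_rate (X t) (\<Theta> t)) (at t within {T\<^sub>0..T\<^sub>0+h})"
    and "\<forall>t\<in>{T\<^sub>0..T\<^sub>0+h}. t - r < \<Theta> t \<and> \<Theta> t \<le> T\<^sub>0"
proof -
  obtain h u where h: "0 < h" "h * (dU + \<gamma> * (\<bar>xe T\<^sub>0\<bar> + 1)) < 1" "v\<^sub>U / v\<^sub>0 * h \<le> a / v\<^sub>U"
    "h < r - a / v\<^sub>0"
    and u0: "u T\<^sub>0 = (xe T\<^sub>0, \<theta> T\<^sub>0)"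
    and u': "\<forall>t\<in>{T\<^sub>0..T\<^sub>0+h}. (u has_vector_derivative aux_field t (u t)) (at t within {T\<^sub>0..T\<^sub>0+h})"
    by (rule aux_clamped_solution)
  define X where "X t = fst (u t)" for t
  define \<Theta> where "\<Theta> t = snd (u t)" for t
  have ranges: "X t \<in> {xe T\<^sub>0 - 1..xe T\<^sub>0 + 1} \<and> t - r < \<Theta> t \<and> \<Theta> t \<le> T\<^sub>0"
    if "t \<in> {T\<^sub>0..T\<^sub>0+h}" for t
    unfolding X_def \<Theta>_def by (rule aux_clamped_solution_ranges[OF h(2-4) u0 u' that])
  have unclamped: "aux_field t (u t) = (X_rate t (X t) (\<Theta> t), Theta_rate (X t) (\<Theta> t))"
    if "t \<in> {T\<^sub>0..T\<^sub>0+h}" for t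
  proof -
    have "-r \<le> \<Theta> t"
      using ranges[OF that] that T\<^sub>0_pos by auto
    then show ?thesis
      using ranges[OF that]
      by (simp add: aux_field_def clamp_X_def clamp_Theta_def X_def \<Theta>_def clamp_real_eq_self)
  qed
  show ?thesis
  proof (rule that[of h X \<Theta>])
    show "X T\<^sub>0 = xe T\<^sub>0" "\<Theta> T\<^sub>0 = \<theta> T\<^sub>0"
      using u0 by (simp_all add: X_def \<Theta>_def)
    show "\<forall>t\<in>{T\<^sub>0..T\<^sub>0+h}. (X has_real_derivative X_rate t (X t) (\<Theta> t)) (at t within {T\<^sub>0..T\<^sub>0+h})"
      and "\<forall>t\<in>{T\<^sub>0..T\<^sub>0+h}. (\<Theta> has_real_derivative Theta_rate (X t) (\<Theta> t)) (at t within {T\<^sub>0..T\<^sub>0+h})"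
      using has_vector_derivative_fst_snd[OF u'[rule_format]] unclamped
      unfolding X_def[abs_def] \<Theta>_def[abs_def] by auto
  qed (use h(1) ranges in auto)
qed

end

locale continuation = finite_sol +
  fixes h :: real and X \<Theta> :: "real \<Rightarrow> real"
  assumes h_pos: "0 < h"
    and X_init: "X T\<^sub>0 = xe T\<^sub>0" and Theta_init: "\<Theta> T\<^sub>0 = \<theta> T\<^sub>0"
    and X_deriv: "\<forall>t\<in>{T\<^sub>0..T\<^sub>0+h}. (X has_real_derivative X_rate t (X t) (\<Theta> t)) (at t within {T\<^sub>0..T\<^sub>0+h})"
    and Theta_deriv: "\<forall>t\<in>{T\<^sub>0..T\<^sub>0+h}.
      (\<Theta> has_real_derivative Theta_rate (X t) (\<Theta> t)) (at t within {T\<^sub>0..T\<^sub>0+h})"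
    and Theta_window: "\<forall>t\<in>{T\<^sub>0..T\<^sub>0+h}. t - r < \<Theta> t \<and> \<Theta> t \<le> T\<^sub>0"
begin

lemma Theta_lt: "t \<in> {T\<^sub>0..T\<^sub>0+h} \<Longrightarrow> \<Theta> t < t"
  using Theta_window theta_window[of T\<^sub>0] Theta_init T\<^sub>0_pos
  by (cases "t = T\<^sub>0") fastforce+

lemma Theta_in_past: "t \<in> {T\<^sub>0..T\<^sub>0+h} \<Longrightarrow> \<Theta> t \<in> {-r..T\<^sub>0}"
  using Theta_window T\<^sub>0_pos by fastforce

lemma continuous_on_X: "continuous_on {T\<^sub>0..T\<^sub>0+h} X"
  using X_deriv by (intro DERIV_continuous_on) auto

lemma continuous_on_Theta: "continuous_on {T\<^sub>0..T\<^sub>0+h} \<Theta>"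
  using Theta_deriv by (intro DERIV_continuous_on) auto

lemma continuous_on_X_rate: "continuous_on {T\<^sub>0..T\<^sub>0+h} (\<lambda>t. X_rate t (X t) (\<Theta> t))"
proof -
  have "continuous_on {T\<^sub>0..T\<^sub>0+h} (\<lambda>t. xe (\<Theta> t))"
    using Theta_in_past by (intro continuous_on_compose2[OF continuous_on_xe continuous_on_Theta]) auto
  then show ?thesis
    unfolding X_rate_def Theta_rate_def
    by (intro continuous_intros continuous_on_X continuous_on_Theta continuous_on_compose2[OF continuous_on_v]
        continuous_on_compose2[OF continuous_on_g]) (auto simp: less_imp_neq[OF v_pos, symmetric])
qed

definition y :: "real \<Rightarrow> real" where
  "y t = (if t < T\<^sub>0 then x t else X t)"

definition y' :: "real \<Rightarrow> real" where
  "y' t = (if t < T\<^sub>0 then x' t else X_rate t (X t) (\<Theta> t))"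

lemma y_eq_xe: "t \<in> {-r..T\<^sub>0} \<Longrightarrow> y t = xe t"
  by (cases "t < T\<^sub>0") (auto simp: y_def xe_eq X_init)

lemma y_eq_X: "t \<in> {T\<^sub>0..T\<^sub>0+h} \<Longrightarrow> y t = X t"
  by (auto simp: y_def X_init xe_eq)

lemma continuous_on_y: "continuous_on {-r..T\<^sub>0+h} y"
proof -
  have "continuous_on ({-r..T\<^sub>0} \<union> {T\<^sub>0..T\<^sub>0+h}) y"
    using continuous_on_eq[OF continuous_on_xe] continuous_on_eq[OF continuous_on_X] y_eq_xe y_eq_X
    by (intro continuous_on_closed_Un) auto
  moreover have "{-r..T\<^sub>0} \<union> {T\<^sub>0..T\<^sub>0+h} = {-r..T\<^sub>0+h}"
    using h_pos r_pos T\<^sub>0_pos by auto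
  ultimately show ?thesis
    by simp
qed

lemma y_deriv:
  assumes t: "t \<in> {-r..<T\<^sub>0+h}"
  shows "(y has_real_derivative y' t) (at t within {-r..T\<^sub>0+h})"
proof -
  consider "t < T\<^sub>0" | "t = T\<^sub>0" | "T\<^sub>0 < t"
    by linarith
  then show ?thesis
  proof cases
    case 1
    have "at t within {-r..T\<^sub>0+h} = at t within {-r..<T\<^sub>0}"
      by (rule at_within_nhd[where S="{..<T\<^sub>0}"]) (use 1 h_pos in auto)
    moreover have "(y has_real_derivative x' t) (at t within {-r..<T\<^sub>0})"
      using x_deriv[of t] 1 t has_vector_derivative_transform[of t "{-r..<T\<^sub>0}" y x]
      by (simp add: y_def has_real_derivative_iff_has_vector_derivative)
    ultimately show ?thesis
      using 1 by (simp add: y'_def)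
  next
    case 2
    have "y s = xe s" if "s \<in> {T\<^sub>0/2..T\<^sub>0}" for s
      using that T\<^sub>0_pos r_pos by (intro y_eq_xe) auto
    then have left: "(y has_real_derivative y' T\<^sub>0) (at T\<^sub>0 within {T\<^sub>0/2..T\<^sub>0})"
      using xe_left_deriv T\<^sub>0_pos has_vector_derivative_transform[of T\<^sub>0 "{T\<^sub>0/2..T\<^sub>0}" y xe]
      by (simp add: y'_def X_init Theta_init has_real_derivative_iff_has_vector_derivative)
    have right: "(y has_real_derivative y' T\<^sub>0) (at T\<^sub>0 within {T\<^sub>0..T\<^sub>0+h})"
      using X_deriv h_pos y_eq_X has_vector_derivative_transform[of T\<^sub>0 "{T\<^sub>0..T\<^sub>0+h}" y X]
      by (simp add: y'_def has_real_derivative_iff_has_vector_derivative)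
    have "at T\<^sub>0 within {-r..T\<^sub>0+h} = at T\<^sub>0 within ({T\<^sub>0/2..T\<^sub>0} \<union> {T\<^sub>0..T\<^sub>0+h})"
      by (rule at_within_nhd[where S="{T\<^sub>0/2<..}"]) (use T\<^sub>0_pos h_pos r_pos in auto)
    then show ?thesis
      using has_real_derivative_within_Un[OF left right] 2 by simp
  next
    case 3
    have "at t within {-r..T\<^sub>0+h} = at t within {T\<^sub>0..T\<^sub>0+h}"
      by (rule at_within_nhd[where S="{T\<^sub>0<..}"]) (use 3 h_pos r_pos T\<^sub>0_pos in auto)
    moreover have "(y has_real_derivative y' t) (at t within {T\<^sub>0..T\<^sub>0+h})"
      using X_deriv 3 t y_eq_X has_vector_derivative_transform[of t "{T\<^sub>0..T\<^sub>0+h}" y X]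
      by (simp add: y'_def has_real_derivative_iff_has_vector_derivative)
    ultimately show ?thesis
      by simp
  qed
qed

lemma continuous_on_y': "continuous_on {-r..T\<^sub>0+h} y'"
proof -
  have "continuous_on {-r..T\<^sub>0/2} y'"
    using T\<^sub>0_pos by (intro continuous_on_eq[OF continuous_on_subset[OF x'_cont]]) (auto simp: y'_def)
  moreover have "continuous_on {T\<^sub>0/2..T\<^sub>0} y'"
  proof (rule continuous_on_eq[OF continuous_on_subset[OF continuous_on_X_rate_theta]])
    fix t assume "t \<in> {T\<^sub>0/2..T\<^sub>0}"
    then show "X_rate t (xe t) (\<theta> t) = y' t"
      using T\<^sub>0_pos x'_eq_X_rate[of t] by (cases "t < T\<^sub>0") (auto simp: y'_def X_init Theta_init)
  qed (use T\<^sub>0_pos in auto)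
  moreover have "continuous_on {T\<^sub>0..T\<^sub>0+h} y'"
    by (rule continuous_on_eq[OF continuous_on_X_rate]) (simp add: y'_def)
  ultimately have "continuous_on ({-r..T\<^sub>0/2} \<union> {T\<^sub>0/2..T\<^sub>0} \<union> {T\<^sub>0..T\<^sub>0+h}) y'"
    by (intro continuous_on_closed_Un) auto
  moreover have "{-r..T\<^sub>0/2} \<union> {T\<^sub>0/2..T\<^sub>0} \<union> {T\<^sub>0..T\<^sub>0+h} = {-r..T\<^sub>0+h}"
    using T\<^sub>0_pos h_pos r_pos by auto
  ultimately show ?thesis
    by simp
qed

definition Vy :: "real \<Rightarrow> real" where
  "Vy s = integral {-r..s} (\<lambda>\<tau>. v (y \<tau>))"

lemma Vy_deriv: "s \<in> {-r..T\<^sub>0+h} \<Longrightarrow> (Vy has_real_derivative v (y s)) (at s within {-r..T\<^sub>0+h})"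
  unfolding Vy_def[abs_def]
  by (rule integral_has_real_derivative) (auto intro: continuous_on_compose2[OF continuous_on_v continuous_on_y])

lemma Vy_eq_V: "s \<in> {-r..T\<^sub>0} \<Longrightarrow> Vy s = V s"
  unfolding Vy_def V_def by (intro integral_cong) (auto simp: y_eq_xe)

text \<open>The constraint defining the delay is preserved because \<open>\<Theta>' = v (X t) / v (xe (\<Theta> t))\<close>
  is exactly the speed needed to keep \<open>Vy t - Vy (\<Theta> t)\<close> constant.\<close>

lemma Vy_Theta:
  assumes t: "t \<in> {T\<^sub>0..T\<^sub>0+h}"
  shows "Vy t - Vy (\<Theta> t) = a"
proof -
  have "0 * (t - T\<^sub>0) \<le> (Vy t - Vy (\<Theta> t)) - (Vy T\<^sub>0 - Vy (\<Theta> T\<^sub>0))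
      \<and> (Vy t - Vy (\<Theta> t)) - (Vy T\<^sub>0 - Vy (\<Theta> T\<^sub>0)) \<le> 0 * (t - T\<^sub>0)"
  proof (rule increment_bounds_from_derivative_bounds[where w="\<lambda>_. 0"])
    fix s assume s: "s \<in> {T\<^sub>0..t}"
    then have s_in: "s \<in> {T\<^sub>0..T\<^sub>0+h}"
      using t by auto
    have sub: "{T\<^sub>0..t} \<subseteq> {-r..T\<^sub>0+h}"
      using t r_pos T\<^sub>0_pos by auto
    have "(Vy has_real_derivative v (y s)) (at s within {T\<^sub>0..t})"
      using Vy_deriv[of s] DERIV_subset sub s by blast
    moreover have "((\<lambda>s. Vy (\<Theta> s)) has_real_derivative Theta_rate (X s) (\<Theta> s) * v (y (\<Theta> s)))
        (at s within {T\<^sub>0..t})"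
    proof -
      have img: "\<Theta> ` {T\<^sub>0..t} \<subseteq> {-r..T\<^sub>0+h}"
        using Theta_in_past t h_pos by fastforce
      moreover have "\<Theta> s \<in> {-r..T\<^sub>0+h}"
        using img s by blast
      ultimately have "(Vy has_real_derivative v (y (\<Theta> s))) (at (\<Theta> s) within \<Theta> ` {T\<^sub>0..t})"
        using DERIV_subset Vy_deriv by blast
      moreover have "(\<Theta> has_real_derivative Theta_rate (X s) (\<Theta> s)) (at s within {T\<^sub>0..t})"
        using DERIV_subset Theta_deriv s_in t by fastforce
      ultimately show ?thesis
        using vector_diff_chain_within
        by (fastforce simp: has_real_derivative_iff_has_vector_derivative o_def)
    qed
    moreover have "Theta_rate (X s) (\<Theta> s) * v (y (\<Theta> s)) = v (y s)"
      using Theta_in_past[OF s_in] v_pos[of "xe (\<Theta> s)"]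
      by (simp add: y_eq_xe y_eq_X[OF s_in] Theta_rate_def)
    ultimately show "((\<lambda>s. Vy s - Vy (\<Theta> s)) has_real_derivative 0) (at s within {T\<^sub>0..t})"
      using DERIV_diff by fastforce
  qed (use t in auto)
  moreover have "Vy T\<^sub>0 - Vy (\<Theta> T\<^sub>0) = a"
    using theta_bounds[of T\<^sub>0] Theta_init Theta_in_past[of T\<^sub>0] T\<^sub>0_pos h_pos r_pos
    by (simp add: Vy_eq_V)
  ultimately show ?thesis
    by simp
qed

lemma delay_y:
  assumes t: "t \<in> {T\<^sub>0..<T\<^sub>0+h}"
  shows "delay v a r (\<lambda>s. y (t + s)) = t - \<Theta> t"
proof (rule delay_eqI)
  fix s assume "s \<in> {t-r..t}"
  then show "(Vy has_real_derivative v (y s)) (at s within {t-r..t})"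
    using t T\<^sub>0_pos by (intro DERIV_subset[OF Vy_deriv]) auto
next
  show "0 < t - \<Theta> t" "t - \<Theta> t < r"
    using Theta_lt[of t] Theta_window[rule_format, of t] t by auto
  show "Vy t - Vy (t - (t - \<Theta> t)) = a"
    using Vy_Theta[of t] t by simp
qed

lemma y_solves:
  assumes t: "0 < t" "t < T\<^sub>0 + h"
  shows "(y has_real_derivative Gfun \<beta> \<mu> \<gamma> a g v r (\<lambda>s. y (t + s))) (at t)"
proof -
  have "at t within {-r..T\<^sub>0+h} = at t"
    by (rule at_within_interior) (use t r_pos in auto)
  then have deriv: "(y has_real_derivative y' t) (at t)"
    using y_deriv[of t] t r_pos by auto
  have "y' t = Gfun \<beta> \<mu> \<gamma> a g v r (\<lambda>s. y (t + s))"
  proof (cases "t < T\<^sub>0")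
    case True
    have "Gfun \<beta> \<mu> \<gamma> a g v r (\<lambda>s. x (t + s)) = Gfun \<beta> \<mu> \<gamma> a g v r (\<lambda>s. y (t + s))"
      using True t is_sol_delay_bounds[OF sol, of t] by (intro Gfun_cong) (auto simp: y_def)
    then show ?thesis
      using True x'_eq_Gfun[of t] t by (simp add: y'_def)
  next
    case False
    then have t_in: "t \<in> {T\<^sub>0..T\<^sub>0+h}"
      using t by auto
    have "y (t - (t - \<Theta> t)) = xe (\<Theta> t)"
      using Theta_in_past[OF t_in] by (simp add: y_eq_xe)
    then show ?thesis
      using False t delay_y[of t] y_eq_X[OF t_in]
      by (simp add: Gfun_def y'_def X_rate_def Theta_rate_def Let_def)
  qed
  with deriv show ?thesis
    by simp
qed

lemma y_is_sol: "is_sol \<beta> \<mu> \<gamma> a g v r \<phi> (ereal (T\<^sub>0 + h)) y"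
  unfolding is_sol_def
proof (intro conjI allI impI)
  show "0 < ereal (T\<^sub>0 + h)"
    using T\<^sub>0_pos h_pos by simp
  have dom: "{s. -r \<le> s \<and> ereal s < ereal (T\<^sub>0 + h)} = {-r..<T\<^sub>0+h}"
    by auto
  show "\<exists>y''. (\<forall>t\<in>{s. -r \<le> s \<and> ereal s < ereal (T\<^sub>0 + h)}.
      (y has_real_derivative y'' t) (at t within {s. -r \<le> s \<and> ereal s < ereal (T\<^sub>0 + h)}))
      \<and> continuous_on {s. -r \<le> s \<and> ereal s < ereal (T\<^sub>0 + h)} y''"
    unfolding dom
  proof (intro exI[of _ y'] conjI ballI)
    fix t assume "t \<in> {-r..<T\<^sub>0+h}"
    then show "(y has_real_derivative y' t) (at t within {-r..<T\<^sub>0+h})"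
      by (intro DERIV_subset[OF y_deriv]) auto
  next
    show "continuous_on {-r..<T\<^sub>0+h} y'"
      by (rule continuous_on_subset[OF continuous_on_y']) auto
  qed
  show "\<forall>s\<in>{-r..0}. y s = \<phi> s"
    using sol T\<^sub>0_pos by (auto simp: is_sol_def y_def)
  show "(y has_real_derivative Gfun \<beta> \<mu> \<gamma> a g v r (\<lambda>s. y (t + s))) (at t)"
    if "0 < t \<and> ereal t < ereal (T\<^sub>0 + h)" for t
    using that y_solves by simp
qed

end

context finite_sol
begin

lemma proper_continuation:
  "\<exists>T y. ereal T\<^sub>0 < T \<and> is_sol \<beta> \<mu> \<gamma> a g v r \<phi> T y \<and> (\<forall>t. -r \<le> t \<and> ereal t < ereal T\<^sub>0 \<longrightarrow> y t = x t)"
proof -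
  obtain h X \<Theta> where "0 < h" "X T\<^sub>0 = xe T\<^sub>0" "\<Theta> T\<^sub>0 = \<theta> T\<^sub>0"
    "\<forall>t\<in>{T\<^sub>0..T\<^sub>0+h}. (X has_real_derivative X_rate t (X t) (\<Theta> t)) (at t within {T\<^sub>0..T\<^sub>0+h})"
    "\<forall>t\<in>{T\<^sub>0..T\<^sub>0+h}. (\<Theta> has_real_derivative Theta_rate (X t) (\<Theta> t)) (at t within {T\<^sub>0..T\<^sub>0+h})"
    "\<forall>t\<in>{T\<^sub>0..T\<^sub>0+h}. t - r < \<Theta> t \<and> \<Theta> t \<le> T\<^sub>0"
    by (rule aux_local_solution)
  then interpret continuation \<beta> \<mu> \<gamma> a r v\<^sub>0 v\<^sub>U g g' v v' \<phi> x x' T\<^sub>0 h X \<Theta>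
    by unfold_locales
  show ?thesis
    using y_is_sol h_pos by (intro exI[of _ "ereal (T\<^sub>0 + h)"] exI[of _ y]) (auto simp: y_def)
qed

end

context sdde
begin

theorem max_sol_infinite:
  assumes "max_sol \<beta> \<mu> \<gamma> a g v r \<phi> T x"
  shows "T = \<infinity>"
proof (rule ccontr)
  assume "T \<noteq> \<infinity>"
  have sol: "is_sol \<beta> \<mu> \<gamma> a g v r \<phi> T x"
    using assms by (simp add: max_sol_def)
  then obtain T\<^sub>0 where T: "T = ereal T\<^sub>0"
    using \<open>T \<noteq> \<infinity>\<close> by (cases T) (auto simp: is_sol_def)
  have dom: "{s. -r \<le> s \<and> ereal s < T} = {-r..<T\<^sub>0}"
    using T by auto
  obtain x' where "\<forall>t\<in>{-r..<T\<^sub>0}. (x has_real_derivative x' t) (at t within {-r..<T\<^sub>0})"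
    "continuous_on {-r..<T\<^sub>0} x'"
    using sol unfolding is_sol_def dom by blast
  then interpret finite_sol \<beta> \<mu> \<gamma> a r v\<^sub>0 v\<^sub>U g g' v v' \<phi> x x' T\<^sub>0
    using sol T by unfold_locales auto
  show False
    using proper_continuation assms T by (auto simp: max_sol_def)
qed

theorem max_sol_long_time_behaviour:
  assumes max: "max_sol \<beta> \<mu> \<gamma> a g v r \<phi> T x"
  shows "T = \<infinity> \<and>
    (\<forall>N. (\<exists>U. open U \<and> {dL / \<gamma>..dU / \<gamma>} \<subseteq> U \<and> U \<subseteq> N) \<longrightarrow> (\<exists>t0\<ge>0. \<forall>t\<ge>t0. x t \<in> N)) \<and>
    ((\<forall>s\<in>{-r..0}. \<phi> s \<in> {dL / \<gamma>..dU / \<gamma>}) \<longrightarrow> (\<forall>t\<ge>0. x t \<in> {dL / \<gamma>..dU / \<gamma>})) \<and>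
    ((\<forall>s\<in>{-r..0}. \<phi> s > 0) \<longrightarrow> (\<forall>t\<ge>-r. x t > 0))"
proof -
  have T: "T = \<infinity>"
    by (rule max_sol_infinite[OF max])
  with max have sol: "is_sol \<beta> \<mu> \<gamma> a g v r \<phi> \<infinity> x"
    by (simp add: max_sol_def)
  have attraction: "\<forall>N. (\<exists>U. open U \<and> {dL / \<gamma>..dU / \<gamma>} \<subseteq> U \<and> U \<subseteq> N) \<longrightarrow>
      (\<exists>t0\<ge>0. \<forall>t\<ge>t0. x t \<in> N)"
  proof (intro allI impI)
    fix N assume "\<exists>U. open U \<and> {dL / \<gamma>..dU / \<gamma>} \<subseteq> U \<and> U \<subseteq> N"
    then obtain U where U: "open U" "{dL / \<gamma>..dU / \<gamma>} \<subseteq> U" "U \<subseteq> N"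
      by blast
    from is_sol_eventually_in_open[OF sol U(1,2)] U(3) show "\<exists>t0\<ge>0. \<forall>t\<ge>t0. x t \<in> N"
      by blast
  qed
  have invariance: "(\<forall>s\<in>{-r..0}. \<phi> s \<in> {dL / \<gamma>..dU / \<gamma>}) \<longrightarrow> (\<forall>t\<ge>0. x t \<in> {dL / \<gamma>..dU / \<gamma>})"
    using is_sol_invariant_interval[OF sol] by simp
  have positivity: "(\<forall>s\<in>{-r..0}. \<phi> s > 0) \<longrightarrow> (\<forall>t\<ge>-r. x t > 0)"
    using is_sol_positive[OF sol] by simp
  show ?thesis
    by (intro conjI T attraction invariance positivity)
qed

end

theorem proposition3p2:
  fixes \<beta> \<mu> \<gamma> a r v\<^sub>0 v\<^sub>U :: real and g g' v v' :: "real \<Rightarrow> real"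
  assumes "\<beta> > 0" and "\<mu> > 0" and "\<gamma> > 0" and "a > 0"
    and "\<And>y. (g has_real_derivative g' y) (at y)" and "continuous_on UNIV g'"
    and "\<And>y. g y > 0" and "bdd_above (range g)" and "Inf (range g) > 0"
    and "\<And>y. (v has_real_derivative v' y) (at y)" and "continuous_on UNIV v'"
    and "v\<^sub>0 > 0" and "\<And>y. v\<^sub>0 \<le> v y \<and> v y \<le> v\<^sub>U"
    and "r > a / v\<^sub>0"
  defines "dL \<equiv> \<beta> * (v\<^sub>0 / v\<^sub>U) * exp (-\<mu> * a / v\<^sub>0) * Inf (range g)"
    and "dU \<equiv> \<beta> * Sup (range g) * (v\<^sub>U / v\<^sub>0)"
  defines "Q \<equiv> {dL / \<gamma> .. dU / \<gamma>}"
  shows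
    "\<forall>\<phi> T x. \<phi> \<in> XG \<beta> \<mu> \<gamma> a g v r \<and> max_sol \<beta> \<mu> \<gamma> a g v r \<phi> T x \<longrightarrow>
       T = \<infinity> \<and>
       (\<forall>N. (\<exists>U. open U \<and> Q \<subseteq> U \<and> U \<subseteq> N) \<longrightarrow>
              (\<exists>t0\<ge>0. \<forall>t\<ge>t0. x t \<in> N)) \<and>
       ((\<forall>s\<in>{-r..0}. \<phi> s \<in> Q) \<longrightarrow> (\<forall>t\<ge>0. x t \<in> Q)) \<and>
       ((\<forall>s\<in>{-r..0}. \<phi> s > 0) \<longrightarrow> (\<forall>t\<ge>-r. x t > 0))"
proof -
  interpret S: sdde \<beta> \<mu> \<gamma> a r v\<^sub>0 v\<^sub>U g g' v v'
    by unfold_locales (fact assms)+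
  have dL: "dL = S.dL" and dU: "dU = S.dU"
    unfolding dL_def dU_def S.dL_def S.dU_def by simp_all
  show ?thesis
    unfolding Q_def dL dU by (intro allI impI S.max_sol_long_time_behaviour) simp
qed

end
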